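(* The flow rewriting system $\mathsf c$ is terminating on the set of cycle-free atomic flows: there is no infinite chain $A_1\to_{\mathsf c}A_2\to_{\mathsf c}\cdots$ with $A_1$ cycle-free.
   Context: An atomic flow is a tuple $(V,E,\eta,up,lo)$: finite sets of vertices and edges, a labelling of vertices by interaction, cut, weakening, coweakening, contraction or cocontraction, and maps $up:E\to V\cup\{\top\}$, $lo:E\to V\cup\{\bot\}$. Upper edges of $\nu$: $lo(\epsilon)=\nu$; lower edges: $up(\epsilon)=\nu$. (Upper, lower) edge numbers: $(0,2)$ interaction, $(2,0)$ cut, $(0,1)$ weakening, $(1,0)$ coweakening, $(2,1)$ contraction, $(1,2)$ cocontraction; no directed cycles; there is $\pi:E\to\{+,-\}$ giving all edges of a (co)contraction the same sign and the two edges of an interaction/cut different signs. A path from $\nu$ to $\nu'$ is a sequence of edges $\epsilon_1,\dots,\epsilon_h$ with $lo(\epsilon_i)=up(\epsilon_{i+1})$, $up(\epsilon_1)=\nu$, $lo(\epsilon_h)=\nu'$; its reversal is a path from $\nu'$ to $\nu$. An $\mathsf{ai}$-path from $\nu$ to $\nu'$ is either a path from $\nu$ to $\nu'$ or a sequence $\epsilon_1,\dots,\epsilon_k,\epsilon_{k+1},\dots,\epsilon_h$ with $\epsilon_k\neq\epsilon_{k+1}$ such that, for some interaction or cut vertex $\nu''$, $\epsilon_1,\dots,\epsilon_k$ is an $\mathsf{ai}$-path from $\nu$ to $\nu''$ and $\epsilon_{k+1},\dots,\epsilon_h$ is an $\mathsf{ai}$-path from $\nu''$ to $\nu'$. An $\mathsf{ai}$-cycle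 is an $\mathsf{ai}$-path from a vertex to itself in which no edge appears twice. A flow is cycle-free if it has no $\mathsf{ai}$-cycle. $A\to_{\mathsf c}B$ means $B$ results from $A$ by one of these subgraph replacements: (c1) a contraction with upper edges $\epsilon_1,\epsilon_2$ whose lower edge is an upper edge of a cut with other upper edge $\epsilon_3$: replace by a new cocontraction with upper edge $\epsilon_3$ and new lower edges $\delta_1,\delta_2$, and two new cuts with upper edges $\{\epsilon_1,\delta_1\}$ and $\{\epsilon_2,\delta_2\}$; (c2) an interaction with lower edges $\epsilon_3,\epsilon_4$ where $\epsilon_4$ is the upper edge of a cocontraction with lower edges $\epsilon_1,\epsilon_2$: replace by a new contraction with lower edge $\epsilon_3$ and new upper edges $\delta_1,\delta_2$, and two new interactions with lower edges $\{\epsilon_1,\delta_1\}$ and $\{\epsilon_2,\delta_2\}$; (c3) a contraction with upper edges $\epsilon_1,\epsilon_2$ whose lower edge is the upper edge of a cocontraction with lower edges $\epsilon_3,\epsilon_4$: replace by cocontractions $\kappa_1,\kappa_2$ with upper edges $\epsilon_1,\epsilon_2$, contractions $\gamma_3,\gamma_4$ with lower edges $\epsilon_3,\epsilon_4$, and four new edges, one from each $\kappa_i$ to each $\gamma_j$. *)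

theory Defs
  imports Main
begin

datatype vlabel = Interaction | Cut | Weak | Coweak | Contr | Cocontr

(* Endpoints of edges: Top (for up), Bot (for lo), or a vertex *)
datatype node = Top | Bot | Vtx nat

(* A flow: vertices and edges are named by natural numbers (an infinite supply
   of names is needed so that rewriting can create fresh vertices/edges). *)
record flow =
  fV :: "nat set"
  fE :: "nat set"
  flab :: "nat \<Rightarrow> vlabel"
  fup :: "nat \<Rightarrow> node"
  flo :: "nat \<Rightarrow> node"

fun upper_count :: "vlabel \<Rightarrow> nat" where
  "upper_count Interaction = 0" | "upper_count Cut = 2" | "upper_count Weak = 0"
| "upper_count Coweak = 1" | "upper_count Contr = 2" | "upper_count Cocontr = 1"

fun lower_count :: "vlabel \<Rightarrow> nat" where
  "lower_count Interaction = 2" | "lower_count Cut = 0" | "lower_count Weak = 1"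
| "lower_count Coweak = 0" | "lower_count Contr = 1" | "lower_count Cocontr = 2"

definition incident :: "flow \<Rightarrow> nat \<Rightarrow> nat \<Rightarrow> bool" where
  "incident F e v \<longleftrightarrow> fup F e = Vtx v \<or> flo F e = Vtx v"

definition atomic_flow :: "flow \<Rightarrow> bool" where
  "atomic_flow F \<longleftrightarrow>
     finite (fV F) \<and> finite (fE F)
   \<and> (\<forall>e\<in>fE F. fup F e \<in> {Top} \<union> Vtx ` fV F \<and> flo F e \<in> {Bot} \<union> Vtx ` fV F)
   \<and> (\<forall>v\<in>fV F. card {e\<in>fE F. flo F e = Vtx v} = upper_count (flab F v)
               \<and> card {e\<in>fE F. fup F e = Vtx v} = lower_count (flab F v))
   \<and> acyclic {(v, w). \<exists>e\<in>fE F. fup F e = Vtx v \<and> flo F e = Vtx w}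
   \<and> (\<exists>\<pi> :: nat \<Rightarrow> bool. \<forall>v\<in>fV F.
        (flab F v \<in> {Contr, Cocontr} \<longrightarrow>
           (\<forall>e\<in>fE F. \<forall>e'\<in>fE F. incident F e v \<and> incident F e' v \<longrightarrow> \<pi> e = \<pi> e'))
      \<and> (flab F v \<in> {Interaction, Cut} \<longrightarrow>
           (\<forall>e\<in>fE F. \<forall>e'\<in>fE F. incident F e v \<and> incident F e' v \<and> e \<noteq> e' \<longrightarrow> \<pi> e \<noteq> \<pi> e')))"

definition dpath :: "flow \<Rightarrow> nat \<Rightarrow> nat \<Rightarrow> nat list \<Rightarrow> bool" where
  "dpath F v w es \<longleftrightarrow> es \<noteq> [] \<and> set es \<subseteq> fE F
     \<and> fup F (hd es) = Vtx v \<and> flo F (last es) = Vtx w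
     \<and> (\<forall>i. Suc i < length es \<longrightarrow> flo F (es ! i) = fup F (es ! Suc i))"

definition path :: "flow \<Rightarrow> nat \<Rightarrow> nat \<Rightarrow> nat list \<Rightarrow> bool" where
  "path F v w es \<longleftrightarrow> dpath F v w es \<or> dpath F w v (rev es)"

inductive ai_path :: "flow \<Rightarrow> nat \<Rightarrow> nat \<Rightarrow> nat list \<Rightarrow> bool" for F where
  ai_base: "path F v w es \<Longrightarrow> ai_path F v w es"
| ai_join: "\<lbrakk> ai_path F v u xs; ai_path F u w ys; u \<in> fV F;
              flab F u \<in> {Interaction, Cut}; last xs \<noteq> hd ys \<rbrakk>
            \<Longrightarrow> ai_path F v w (xs @ ys)"

definition ai_cycle :: "flow \<Rightarrow> nat \<Rightarrow> nat list \<Rightarrow> bool" where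
  "ai_cycle F v es \<longleftrightarrow> v \<in> fV F \<and> ai_path F v v es \<and> distinct es"

definition cycle_free :: "flow \<Rightarrow> bool" where
  "cycle_free F \<longleftrightarrow> \<not> (\<exists>v es. ai_cycle F v es)"

definition agrees :: "flow \<Rightarrow> nat set \<Rightarrow> nat set \<Rightarrow> (nat \<Rightarrow> vlabel)
    \<Rightarrow> (nat \<Rightarrow> node) \<Rightarrow> (nat \<Rightarrow> node) \<Rightarrow> bool" where
  "agrees B V E l u d \<longleftrightarrow> fV B = V \<and> fE B = E \<and> (\<forall>v\<in>V. flab B v = l v)
     \<and> (\<forall>e\<in>E. fup B e = u e \<and> flo B e = d e)"

definition c1_step :: "flow \<Rightarrow> flow \<Rightarrow> bool" where
  "c1_step A B \<longleftrightarrow> (\<exists>g k e1 e2 e e3 n k1 k2 d1 d2.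
     g \<in> fV A \<and> flab A g = Contr \<and> k \<in> fV A \<and> flab A k = Cut
   \<and> e1 \<in> fE A \<and> e2 \<in> fE A \<and> e \<in> fE A \<and> e3 \<in> fE A \<and> e1 \<noteq> e2
   \<and> flo A e1 = Vtx g \<and> flo A e2 = Vtx g \<and> fup A e = Vtx g \<and> flo A e = Vtx k
   \<and> flo A e3 = Vtx k \<and> e3 \<noteq> e
   \<and> n \<notin> fV A \<and> k1 \<notin> fV A \<and> k2 \<notin> fV A \<and> distinct [n, k1, k2]
   \<and> d1 \<notin> fE A \<and> d2 \<notin> fE A \<and> d1 \<noteq> d2
   \<and> agrees B ((fV A - {g, k}) \<union> {n, k1, k2}) ((fE A - {e}) \<union> {d1, d2})
       ((flab A)(n := Cocontr, k1 := Cut, k2 := Cut))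
       ((fup A)(d1 := Vtx n, d2 := Vtx n))
       ((flo A)(e1 := Vtx k1, e2 := Vtx k2, e3 := Vtx n, d1 := Vtx k1, d2 := Vtx k2)))"

definition c2_step :: "flow \<Rightarrow> flow \<Rightarrow> bool" where
  "c2_step A B \<longleftrightarrow> (\<exists>i k e1 e2 e3 e4 g i1 i2 d1 d2.
     i \<in> fV A \<and> flab A i = Interaction \<and> k \<in> fV A \<and> flab A k = Cocontr
   \<and> e1 \<in> fE A \<and> e2 \<in> fE A \<and> e3 \<in> fE A \<and> e4 \<in> fE A
   \<and> fup A e3 = Vtx i \<and> fup A e4 = Vtx i \<and> e3 \<noteq> e4 \<and> flo A e4 = Vtx k
   \<and> fup A e1 = Vtx k \<and> fup A e2 = Vtx k \<and> e1 \<noteq> e2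
   \<and> g \<notin> fV A \<and> i1 \<notin> fV A \<and> i2 \<notin> fV A \<and> distinct [g, i1, i2]
   \<and> d1 \<notin> fE A \<and> d2 \<notin> fE A \<and> d1 \<noteq> d2
   \<and> agrees B ((fV A - {i, k}) \<union> {g, i1, i2}) ((fE A - {e4}) \<union> {d1, d2})
       ((flab A)(g := Contr, i1 := Interaction, i2 := Interaction))
       ((fup A)(e3 := Vtx g, e1 := Vtx i1, e2 := Vtx i2, d1 := Vtx i1, d2 := Vtx i2))
       ((flo A)(d1 := Vtx g, d2 := Vtx g)))"

definition c3_step :: "flow \<Rightarrow> flow \<Rightarrow> bool" where
  "c3_step A B \<longleftrightarrow> (\<exists>g k e1 e2 e e3 e4 k1 k2 g3 g4 f13 f14 f23 f24.
     g \<in> fV A \<and> flab A g = Contr \<and> k \<in> fV A \<and> flab A k = Cocontr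
   \<and> e1 \<in> fE A \<and> e2 \<in> fE A \<and> e \<in> fE A \<and> e3 \<in> fE A \<and> e4 \<in> fE A
   \<and> flo A e1 = Vtx g \<and> flo A e2 = Vtx g \<and> e1 \<noteq> e2
   \<and> fup A e = Vtx g \<and> flo A e = Vtx k
   \<and> fup A e3 = Vtx k \<and> fup A e4 = Vtx k \<and> e3 \<noteq> e4
   \<and> k1 \<notin> fV A \<and> k2 \<notin> fV A \<and> g3 \<notin> fV A \<and> g4 \<notin> fV A \<and> distinct [k1, k2, g3, g4]
   \<and> f13 \<notin> fE A \<and> f14 \<notin> fE A \<and> f23 \<notin> fE A \<and> f24 \<notin> fE A \<and> distinct [f13, f14, f23, f24]
   \<and> agrees B ((fV A - {g, k}) \<union> {k1, k2, g3, g4}) ((fE A - {e}) \<union> {f13, f14, f23, f24})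
       ((flab A)(k1 := Cocontr, k2 := Cocontr, g3 := Contr, g4 := Contr))
       ((fup A)(e3 := Vtx g3, e4 := Vtx g4, f13 := Vtx k1, f14 := Vtx k1,
                f23 := Vtx k2, f24 := Vtx k2))
       ((flo A)(e1 := Vtx k1, e2 := Vtx k2, f13 := Vtx g3, f14 := Vtx g4,
                f23 := Vtx g3, f24 := Vtx g4)))"

definition c_step :: "flow \<Rightarrow> flow \<Rightarrow> bool" where
  "c_step A B \<longleftrightarrow> c1_step A B \<or> c2_step A B \<or> c3_step A B"

end

theory Submission
  imports Defs "HOL-Library.Multiset"
begin

text \<open>
  A walk runs along darts, i.e. edges with a direction, passing straight through a contraction or a
  cocontraction and turning back along another edge at a cut or an interaction. A closed walk whose
  edges are distinct is an \<open>ai\<close>-cycle, so a cycle-free flow has no closed walks; then all walks are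
  simple and there are finitely many maximal ones.

  Each turn of a walk gets the letter 1 at a cut or an interaction, and at a (co)contraction the letter 2
  if the walk moves towards the side with a single edge and 0 if it moves away from it. The measure of a
  flow is the total number of inversions of the words of its maximal walks. A \<open>c\<close>-step replaces a
  redex by fresh vertices and edges; collapsing them back onto the redex maps the maximal walks of the
  result injectively to maximal walks of the original flow, and changes the words only where a walk
  uses a fresh edge, where an ascent of two adjacent letters becomes a descent. So every step decreases
  the measure, keeps the flow free of closed walks, and no infinite chain of steps exists.
\<close>

section \<open>Darts, turns and walks\<close>

text \<open>The dart \<open>(a, True)\<close> runs down the edge \<open>a\<close>, from \<open>fup F a\<close> to \<open>flo F a\<close>.\<close>

type_synonym dart = "nat \<times> bool"

definition darts :: "flow \<Rightarrow> dart set" where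
  "darts F = fE F \<times> UNIV"

fun dart_src :: "flow \<Rightarrow> dart \<Rightarrow> node" where
  "dart_src F (a, down) = (if down then fup F a else flo F a)"

fun dart_tgt :: "flow \<Rightarrow> dart \<Rightarrow> node" where
  "dart_tgt F (a, down) = (if down then flo F a else fup F a)"

fun reverse_dart :: "dart \<Rightarrow> dart" where
  "reverse_dart (a, down) = (a, \<not> down)"

definition turn_ok :: "vlabel \<Rightarrow> dart \<Rightarrow> dart \<Rightarrow> bool" where
  "turn_ok l x y \<longleftrightarrow> (l \<in> {Interaction, Cut} \<and> snd x \<noteq> snd y \<and> fst x \<noteq> fst y)
     \<or> (l \<in> {Contr, Cocontr} \<and> snd x = snd y)"

definition turn_at :: "flow \<Rightarrow> nat \<Rightarrow> dart \<Rightarrow> dart \<Rightarrow> bool" where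
  "turn_at F w x y \<longleftrightarrow> w \<in> fV F \<and> fst x \<in> fE F \<and> fst y \<in> fE F
     \<and> dart_tgt F x = Vtx w \<and> dart_src F y = Vtx w \<and> turn_ok (flab F w) x y"

definition turn :: "flow \<Rightarrow> dart \<Rightarrow> dart \<Rightarrow> bool" where
  "turn F x y \<longleftrightarrow> (\<exists>w. turn_at F w x y)"

definition walk :: "flow \<Rightarrow> dart list \<Rightarrow> bool" where
  "walk F w \<longleftrightarrow> w \<noteq> [] \<and> set w \<subseteq> darts F \<and> successively (turn F) w"

definition closed_walk :: "flow \<Rightarrow> dart list \<Rightarrow> bool" where
  "closed_walk F w \<longleftrightarrow> walk F w \<and> (\<exists>z. dart_src F (hd w) = Vtx z \<and> dart_tgt F (last w) = Vtx z)"

definition no_closed_walk :: "flow \<Rightarrow> bool" where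
  "no_closed_walk F \<longleftrightarrow> (\<nexists>w. closed_walk F w)"

definition maximal_walk :: "flow \<Rightarrow> dart list \<Rightarrow> bool" where
  "maximal_walk F w \<longleftrightarrow> walk F w \<and> (\<forall>y. \<not> turn F y (hd w)) \<and> (\<forall>y. \<not> turn F (last w) y)"

lemma turn_at_Pair_iff:
  "turn_at F w (a, b) (c, d) \<longleftrightarrow> w \<in> fV F \<and> turn_ok (flab F w) (a, b) (c, d)
     \<and> a \<in> (if b then {e\<in>fE F. flo F e = Vtx w} else {e\<in>fE F. fup F e = Vtx w})
     \<and> c \<in> (if d then {e\<in>fE F. fup F e = Vtx w} else {e\<in>fE F. flo F e = Vtx w})"
  by (auto simp: turn_at_def)

lemma turn_via_tgt: "dart_tgt F x = Vtx w \<Longrightarrow> turn F x y \<longleftrightarrow> turn_at F w x y"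
  by (auto simp: turn_def turn_at_def)

lemma turn_darts: "turn F x y \<Longrightarrow> x \<in> darts F \<and> y \<in> darts F"
  by (cases x; cases y) (auto simp: turn_def turn_at_def darts_def)

lemma turn_reverse: "turn F x y \<longleftrightarrow> turn F (reverse_dart y) (reverse_dart x)"
  by (cases x; cases y) (auto simp: turn_def turn_at_def turn_ok_def)

lemma dart_ends_reverse [simp]:
  "dart_src F (reverse_dart x) = dart_tgt F x" "dart_tgt F (reverse_dart x) = dart_src F x"
  "fst (reverse_dart x) = fst x" "snd (reverse_dart x) = (\<not> snd x)"
  by (cases x; simp)+

lemma walk_Cons_Cons: "walk F (x # y # w) \<longleftrightarrow> turn F x y \<and> walk F (y # w)"
  using turn_darts by (fastforce simp: walk_def)

lemma walk_nth_turn: "walk F w \<Longrightarrow> Suc i < length w \<Longrightarrow> turn F (w ! i) (w ! Suc i)"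
  unfolding walk_def using successively_nth by blast

lemma walk_take_drop:
  assumes "walk F w" "i < j" "j \<le> length w"
  shows "walk F (take (j - i) (drop i w))"
proof -
  have "w = take i w @ take (j - i) (drop i w) @ drop j w"
    using assms by (metis append.assoc append_take_drop_id le_add_diff_inverse less_imp_le_nat take_add)
  then have "successively (turn F) (take (j - i) (drop i w))"
    using assms(1) unfolding walk_def by (metis successively_append_iff)
  moreover have "set (take (j - i) (drop i w)) \<subseteq> set w"
    by (meson set_drop_subset set_take_subset subset_trans)
  ultimately show ?thesis
    using assms by (auto simp: walk_def)
qed

lemma walk_reverse: "walk F w \<Longrightarrow> walk F (rev (map reverse_dart w))"
proof -
  have "reverse_dart x \<in> darts F" if "x \<in> darts F" for x
    using that by (cases x) (auto simp: darts_def)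
  then show "walk F w \<Longrightarrow> ?thesis"
    by (auto simp: walk_def successively_rev successively_map turn_reverse[symmetric]
        elim!: successively_mono)
qed

lemma closed_subwalk:
  assumes w: "walk F w" and ij: "i < j" "j < length w"
    and src: "dart_src F (w ! i) = dart_src F (w ! j)"
  shows "closed_walk F (take (j - i) (drop i w))"
proof -
  let ?s = "take (j - i) (drop i w)"
  have "?s \<noteq> []" using ij by simp
  then have last: "last ?s = w ! (j - 1)"
    using ij by (simp add: last_conv_nth nth_take nth_drop)
  have "turn F (w ! (j - 1)) (w ! j)"
    using walk_nth_turn[OF w, of "j - 1"] ij by simp
  then obtain z where "dart_tgt F (w ! (j - 1)) = Vtx z" "dart_src F (w ! j) = Vtx z"
    by (auto simp: turn_def turn_at_def)
  moreover have "hd ?s = w ! i" using ij by (simp add: hd_take hd_drop_conv_nth)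
  ultimately show ?thesis
    using walk_take_drop[OF w ij(1)] ij src last by (auto simp: closed_walk_def)
qed

lemma no_closed_walk_distinct: "no_closed_walk F \<Longrightarrow> walk F w \<Longrightarrow> distinct w"
  by (metis closed_subwalk distinct_conv_nth linorder_neqE_nat no_closed_walk_def)

lemma no_closed_walk_turn:
  "no_closed_walk F \<Longrightarrow> turn F x y \<Longrightarrow> dart_src F x = Vtx z \<Longrightarrow> dart_tgt F y \<noteq> Vtx z"
proof
  assume "no_closed_walk F" "turn F x y" "dart_src F x = Vtx z" "dart_tgt F y = Vtx z"
  then have "closed_walk F [x, y]" using turn_darts[of F x y] by (auto simp: closed_walk_def walk_def)
  then show False using \<open>no_closed_walk F\<close> by (auto simp: no_closed_walk_def)
qed

lemma finite_walks:
  assumes "no_closed_walk F" "finite (fE F)"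
  shows "finite {w. walk F w}"
proof (rule finite_subset)
  show "{w. walk F w} \<subseteq> {w. set w \<subseteq> darts F \<and> distinct w}"
    using no_closed_walk_distinct[OF assms(1)] by (auto simp: walk_def)
  show "finite {w. set w \<subseteq> darts F \<and> distinct w}"
    using assms(2) by (intro finite_subset_distinct) (simp add: darts_def)
qed

lemma finite_maximal_walks:
  "no_closed_walk F \<Longrightarrow> finite (fE F) \<Longrightarrow> finite {w. maximal_walk F w}"
  by (rule rev_finite_subset[OF finite_walks]) (auto simp: maximal_walk_def)

lemma maximal_walk_through:
  assumes "no_closed_walk F" "finite (fE F)" "x \<in> darts F"
  shows "\<exists>w. maximal_walk F w \<and> x \<in> set w"
proof -
  let ?S = "{w. walk F w \<and> x \<in> set w}"
  have fin: "finite ?S" by (rule rev_finite_subset[OF finite_walks[OF assms(1,2)]]) auto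
  have "[x] \<in> ?S" using assms(3) by (simp add: walk_def)
  moreover have "\<forall>w\<in>?S. length w < Suc (Max (length ` ?S))"
    using fin by (simp add: le_imp_less_Suc)
  ultimately obtain w where w: "w \<in> ?S" and longest: "\<And>w'. w' \<in> ?S \<Longrightarrow> length w' \<le> length w"
    using ex_has_greatest_nat[of "\<lambda>w. w \<in> ?S" "[x]" length] by blast
  have "\<not> turn F y (hd w)" for y
  proof
    assume "turn F y (hd w)"
    then have "y # w \<in> ?S" using w by (cases w) (auto simp: walk_Cons_Cons)
    then show False using longest by fastforce
  qed
  moreover have "\<not> turn F (last w) y" for y
  proof
    assume "turn F (last w) y"
    then have "w @ [y] \<in> ?S"
      using w turn_darts by (auto simp: walk_def successively_append_iff)
    then show False using longest by fastforce
  qed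
  ultimately show ?thesis using w by (auto simp: maximal_walk_def)
qed

section \<open>Inversions of turn words\<close>

definition turn_type :: "flow \<Rightarrow> dart \<Rightarrow> nat" where
  "turn_type F x = (case dart_tgt F x of
      Vtx w \<Rightarrow> (case flab F w of
          Interaction \<Rightarrow> 1 | Cut \<Rightarrow> 1
        | Contr \<Rightarrow> if snd x then 2 else 0
        | Cocontr \<Rightarrow> if snd x then 0 else 2
        | _ \<Rightarrow> 0)
    | _ \<Rightarrow> 0)"

definition turn_word :: "flow \<Rightarrow> dart list \<Rightarrow> nat list" where
  "turn_word F w = map (turn_type F) (butlast w)"

fun inversions :: "nat list \<Rightarrow> nat" where
  "inversions [] = 0"
| "inversions (a # l) = length (filter (\<lambda>b. b < a) l) + inversions l"

definition inversion_measure :: "flow \<Rightarrow> nat" where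
  "inversion_measure F = (\<Sum>w | maximal_walk F w. inversions (turn_word F w))"

lemma turn_word_Cons_Cons [simp]: "turn_word F (x # y # w) = turn_type F x # turn_word F (y # w)"
  by (simp add: turn_word_def)

lemma turn_word_singleton [simp]: "turn_word F [x] = []"
  by (simp add: turn_word_def)

lemma length_filter_mset_cong: "mset l = mset l' \<Longrightarrow> length (filter P l) = length (filter P l')"
  by (metis mset_filter size_mset)

lemma inversions_swap_less:
  assumes "a < b" "mset l = mset l'" "inversions l \<le> inversions l'"
  shows "inversions (a # b # l) < inversions (b # a # l')"
  using assms length_filter_mset_cong[OF assms(2), of "\<lambda>c. c < a"]
    length_filter_mset_cong[OF assms(2), of "\<lambda>c. c < b"] by simp

section \<open>Simulation of walks\<close>

text \<open>
  Only darts in \<open>R\<close> are identified by \<open>\<phi>\<close>;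
  each of them has a unique predecessor and successor, and a passage through it exchanges two
  adjacent letters of the turn word.
\<close>

locale walk_simulation =
  fixes A B :: flow and \<phi> :: "dart \<Rightarrow> dart" and \<psi> :: "node \<Rightarrow> node"
    and R :: "dart set" and pre suc :: "dart \<Rightarrow> dart"
  assumes finite_A: "finite (fE A)" and finite_B: "finite (fE B)"
    and no_closed_walk_A: "no_closed_walk A"
    and dart_map: "\<And>x. x \<in> darts B \<Longrightarrow> \<phi> x \<in> darts A"
    and turn_map: "\<And>x y. turn B x y \<Longrightarrow> turn A (\<phi> x) (\<phi> y)"
    and ends_map: "\<And>x. x \<in> darts B \<Longrightarrow>
       dart_src A (\<phi> x) = \<psi> (dart_src B x) \<and> dart_tgt A (\<phi> x) = \<psi> (dart_tgt B x)"
    and vertex_map: "\<And>z. \<exists>z'. \<psi> (Vtx z) = Vtx z'"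
    and R_darts: "R \<subseteq> darts B" and R_nonempty: "R \<noteq> {}"
    and inj_outside_R: "\<And>x y. x \<in> darts B \<Longrightarrow> y \<in> darts B \<Longrightarrow> x \<noteq> y \<Longrightarrow> \<phi> x = \<phi> y \<Longrightarrow> x \<in> R"
    and pre_iff: "\<And>x p. x \<in> R \<Longrightarrow> turn B p x \<longleftrightarrow> p = pre x"
    and suc_iff: "\<And>x s. x \<in> R \<Longrightarrow> turn B x s \<longleftrightarrow> s = suc x"
    and pre_suc_notin_R: "\<And>x. x \<in> R \<Longrightarrow> pre x \<notin> R \<and> suc x \<notin> R"
    and R_determined: "\<And>x x'. x \<in> R \<Longrightarrow> x' \<in> R \<Longrightarrow> \<phi> x = \<phi> x'
       \<Longrightarrow> \<phi> (pre x) = \<phi> (pre x') \<Longrightarrow> \<phi> (suc x) = \<phi> (suc x') \<Longrightarrow> x = x'"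
    and lift_pre: "\<And>x y. x \<in> darts B \<Longrightarrow> x \<notin> R \<Longrightarrow> turn A y (\<phi> x) \<Longrightarrow> \<exists>y'. turn B y' x"
    and lift_suc: "\<And>x y. x \<in> darts B \<Longrightarrow> x \<notin> R \<Longrightarrow> turn A (\<phi> x) y \<Longrightarrow> \<exists>y'. turn B x y'"
    and type_kept: "\<And>x y. turn B x y \<Longrightarrow> x \<notin> R \<Longrightarrow> y \<notin> R \<Longrightarrow> turn_type A (\<phi> x) = turn_type B x"
    and type_swap: "\<And>x. x \<in> R \<Longrightarrow> turn_type B (pre x) < turn_type B x
       \<and> turn_type A (\<phi> (pre x)) = turn_type B x \<and> turn_type A (\<phi> x) = turn_type B (pre x)"
begin

lemma walk_map: "walk B w \<Longrightarrow> walk A (map \<phi> w)"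
  using dart_map turn_map by (auto simp: walk_def successively_map elim: successively_mono)

lemma no_closed_walk_B: "no_closed_walk B"
  unfolding no_closed_walk_def
proof
  assume "\<exists>w. closed_walk B w"
  then obtain w z where w: "walk B w" "dart_src B (hd w) = Vtx z" "dart_tgt B (last w) = Vtx z"
    by (auto simp: closed_walk_def)
  obtain z' where z': "\<psi> (Vtx z) = Vtx z'" using vertex_map by blast
  have "w \<noteq> []" "hd w \<in> darts B" "last w \<in> darts B" using w(1) by (auto simp: walk_def)
  then have "closed_walk A (map \<phi> w)"
    using w ends_map z' walk_map by (auto simp: closed_walk_def hd_map last_map)
  then show False using no_closed_walk_A by (auto simp: no_closed_walk_def)
qed

lemma maximal_walk_ends_notin_R: "maximal_walk B w \<Longrightarrow> hd w \<notin> R \<and> last w \<notin> R"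
  unfolding maximal_walk_def by (metis pre_iff suc_iff)

lemma maximal_walk_map:
  assumes "maximal_walk B w"
  shows "maximal_walk A (map \<phi> w)"
proof -
  have w: "walk B w" "w \<noteq> []" "hd w \<in> darts B" "last w \<in> darts B"
    using assms by (auto simp: maximal_walk_def walk_def)
  have "\<not> turn A y (hd (map \<phi> w))" "\<not> turn A (last (map \<phi> w)) y" for y
    using lift_pre[of "hd w" y] lift_suc[of "last w" y] assms w maximal_walk_ends_notin_R
    by (auto simp: maximal_walk_def hd_map last_map)
  then show ?thesis using walk_map[OF w(1)] by (simp add: maximal_walk_def)
qed

lemma maximal_walk_R_neighbours:
  assumes mw: "maximal_walk B w" and i: "i < length w" and R: "w ! i \<in> R"
  shows "0 < i \<and> Suc i < length w \<and> w ! (i - 1) = pre (w ! i) \<and> w ! Suc i = suc (w ! i)"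
proof -
  have wk: "walk B w" and ne: "w \<noteq> []" using mw i by (auto simp: maximal_walk_def)
  have ends: "hd w \<noteq> w ! i" "last w \<noteq> w ! i" using maximal_walk_ends_notin_R[OF mw] R by auto
  have i0: "0 < i"
    using ends(1) ne by (metis gr0I hd_conv_nth)
  moreover have i1: "Suc i < length w"
    using ends(2) ne i by (metis Suc_lessI diff_Suc_1 last_conv_nth)
  moreover have "w ! (i - 1) = pre (w ! i)"
    using walk_nth_turn[OF wk, of "i - 1"] i0 i pre_iff[OF R] by simp
  moreover have "w ! Suc i = suc (w ! i)"
    using walk_nth_turn[OF wk i1] suc_iff[OF R] by simp
  ultimately show ?thesis by blast
qed

lemma inj_on_map_maximal_walks: "inj_on (map \<phi>) {w. maximal_walk B w}"
proof (rule inj_onI)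
  fix w w' assume mw: "w \<in> {w. maximal_walk B w}" "w' \<in> {w. maximal_walk B w}"
    and eq: "map \<phi> w = map \<phi> w'"
  have len: "length w = length w'" using eq by (metis length_map)
  have \<phi>_eq: "\<phi> (w ! j) = \<phi> (w' ! j)" if "j < length w" for j
    using eq len that by (metis nth_map)
  show "w = w'"
  proof (rule nth_equalityI[OF len], rule ccontr)
    fix i assume i: "i < length w" and neq: "w ! i \<noteq> w' ! i"
    have "w ! i \<in> darts B" "w' ! i \<in> darts B"
      using mw i len by (auto simp: maximal_walk_def walk_def dest: nth_mem)
    then have R: "w ! i \<in> R" "w' ! i \<in> R"
      using inj_outside_R[of "w ! i" "w' ! i"] inj_outside_R[of "w' ! i" "w ! i"] neq \<phi>_eq[OF i]
      by auto
    have "0 < i \<and> Suc i < length w \<and> w ! (i - 1) = pre (w ! i) \<and> w ! Suc i = suc (w ! i)"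
      "w' ! (i - 1) = pre (w' ! i) \<and> w' ! Suc i = suc (w' ! i)"
      using maximal_walk_R_neighbours[of w i] maximal_walk_R_neighbours[of w' i] mw i len R by auto
    then have "\<phi> (pre (w ! i)) = \<phi> (pre (w' ! i))" "\<phi> (suc (w ! i)) = \<phi> (suc (w' ! i))"
      using \<phi>_eq[of "i - 1"] \<phi>_eq[of "Suc i"] by auto
    then show False using R_determined[OF R \<phi>_eq[OF i]] neq by blast
  qed
qed

lemma turn_word_map:
  "walk B w \<Longrightarrow> hd w \<notin> R \<Longrightarrow> last w \<notin> R \<Longrightarrow>
   mset (turn_word B w) = mset (turn_word A (map \<phi> w)) \<and>
   inversions (turn_word B w) + (if set w \<inter> R = {} then 0 else 1) \<le> inversions (turn_word A (map \<phi> w))"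
proof (induction w rule: length_induct)
  case (1 w)
  show ?case
  proof (cases w)
    case Nil then show ?thesis using "1.prems" by (simp add: walk_def)
  next
    case (Cons x r)
    note wx = Cons
    show ?thesis
    proof (cases r)
      case Nil then show ?thesis using wx "1.prems" by auto
    next
      case (Cons y r')
      have txy: "turn B x y" and wy: "walk B (y # r')" and x: "x \<notin> R"
        using "1.prems" wx Cons by (auto simp: walk_Cons_Cons)
      show ?thesis
      proof (cases "y \<in> R")
        case False
        have IH: "mset (turn_word B (y # r')) = mset (turn_word A (map \<phi> (y # r')))
          \<and> inversions (turn_word B (y # r')) + (if set (y # r') \<inter> R = {} then 0 else 1)
            \<le> inversions (turn_word A (map \<phi> (y # r')))"
          using "1.prems"(3) wx Cons False wy by (intro "1.IH"[rule_format]) simp_all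
        have "turn_word A (map \<phi> w) = turn_type B x # turn_word A (map \<phi> (y # r'))"
          using type_kept[OF txy x False] wx Cons by simp
        moreover have "set w \<inter> R = set (y # r') \<inter> R" using wx Cons x by auto
        ultimately show ?thesis
          using IH length_filter_mset_cong[of "turn_word B (y # r')" "turn_word A (map \<phi> (y # r'))"]
            wx Cons by simp
      next
        case True
        obtain z r'' where r': "r' = z # r''"
          using "1.prems"(3) wx Cons True by (cases r') auto
        have tyz: "turn B y z" and wz: "walk B (z # r'')"
          using wy r' by (auto simp: walk_Cons_Cons)
        have xz: "x = pre y" "z = suc y" using pre_iff[OF True] suc_iff[OF True] txy tyz by auto
        have "z \<notin> R" using pre_suc_notin_R[OF True] xz by simp
        then have IH: "mset (turn_word B (z # r'')) = mset (turn_word A (map \<phi> (z # r'')))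
          \<and> inversions (turn_word B (z # r'')) \<le> inversions (turn_word A (map \<phi> (z # r'')))"
          using "1.prems"(3) wx Cons r' wz \<open>z \<notin> R\<close> "1.IH"[rule_format, of "z # r''"] by simp
        define lB lA where "lB = turn_word B (z # r'')" and "lA = turn_word A (map \<phi> (z # r''))"
        have "turn_word B w = turn_type B x # turn_type B y # lB"
          "turn_word A (map \<phi> w) = turn_type B y # turn_type B x # lA"
          using type_swap[OF True] xz wx Cons r' by (simp_all add: lA_def lB_def)
        moreover have "inversions (turn_type B x # turn_type B y # lB)
            < inversions (turn_type B y # turn_type B x # lA)"
          using type_swap[OF True] xz IH by (intro inversions_swap_less) (simp_all add: lA_def lB_def)
        moreover have "mset lB = mset lA" using IH by (simp add: lA_def lB_def)
        ultimately show ?thesis using True wx Cons by auto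
      qed
    qed
  qed
qed

lemma inversion_measure_less: "inversion_measure B < inversion_measure A"
proof -
  let ?SB = "{w. maximal_walk B w}" and ?SA = "{w. maximal_walk A w}"
  have fin: "finite ?SB" "finite ?SA"
    using finite_maximal_walks no_closed_walk_A no_closed_walk_B finite_A finite_B by auto
  obtain x where "x \<in> R" using R_nonempty by blast
  then obtain w0 where w0: "maximal_walk B w0" "x \<in> set w0"
    using maximal_walk_through[OF no_closed_walk_B finite_B] R_darts by blast
  have le: "inversions (turn_word B w) + (if set w \<inter> R = {} then 0 else 1)
      \<le> inversions (turn_word A (map \<phi> w))" if "w \<in> ?SB" for w
    using that turn_word_map maximal_walk_ends_notin_R by (auto simp: maximal_walk_def)
  have "inversion_measure B < (\<Sum>w\<in>?SB. inversions (turn_word A (map \<phi> w)))"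
    unfolding inversion_measure_def
  proof (rule sum_strict_mono_ex1[OF fin(1)])
    show "\<forall>w\<in>?SB. inversions (turn_word B w) \<le> inversions (turn_word A (map \<phi> w))"
      using le by fastforce
    show "\<exists>w\<in>?SB. inversions (turn_word B w) < inversions (turn_word A (map \<phi> w))"
      using le[of w0] w0 \<open>x \<in> R\<close> by (intro bexI[of _ w0]) (auto split: if_splits)
  qed
  also have "\<dots> = (\<Sum>w\<in>map \<phi> ` ?SB. inversions (turn_word A w))"
    by (simp add: sum.reindex[OF inj_on_map_maximal_walks] comp_def)
  also have "\<dots> \<le> inversion_measure A"
    unfolding inversion_measure_def using maximal_walk_map by (intro sum_mono2[OF fin(2)]) auto
  finally show ?thesis .
qed

end

section \<open>Cycle-free flows have no closed walks\<close>

lemma downward_walk_dpath: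
  assumes w: "walk F w" and down: "\<forall>x\<in>set w. snd x"
    and ends: "dart_src F (hd w) = Vtx v" "dart_tgt F (last w) = Vtx u"
  shows "dpath F v u (map fst w)"
proof -
  have ends_down: "dart_src F x = fup F (fst x)" "dart_tgt F x = flo F (fst x)" if "x \<in> set w" for x
    using down that by (cases x; auto)+
  have ne: "w \<noteq> []" using w by (simp add: walk_def)
  have "flo F (fst (w ! i)) = fup F (fst (w ! Suc i))" if "Suc i < length w" for i
    using walk_nth_turn[OF w that] ends_down[of "w ! i"] ends_down[of "w ! Suc i"] that
    by (auto simp: turn_def turn_at_def)
  then show ?thesis
    using w ne ends ends_down[of "hd w"] ends_down[of "last w"]
    by (auto simp: dpath_def walk_def darts_def hd_map last_map)
qed

lemma monotone_walk_path:
  assumes w: "walk F w" and mono: "\<forall>x\<in>set w. snd x = d"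
    and ends: "dart_src F (hd w) = Vtx v" "dart_tgt F (last w) = Vtx u"
  shows "path F v u (map fst w)"
proof (cases d)
  case True
  then show ?thesis using downward_walk_dpath[OF w _ ends] mono by (simp add: path_def)
next
  case False
  let ?w = "rev (map reverse_dart w)"
  have ne: "w \<noteq> []" using w by (simp add: walk_def)
  have "\<forall>x\<in>set ?w. snd x" using mono False by auto
  moreover have "dart_src F (hd ?w) = Vtx u" "dart_tgt F (last ?w) = Vtx v"
    using ends ne by (simp_all add: hd_rev last_rev hd_map last_map)
  ultimately have "dpath F u v (map fst ?w)"
    using downward_walk_dpath[OF walk_reverse[OF w]] by blast
  moreover have "map fst ?w = rev (map fst w)" by (simp add: rev_map comp_def)
  ultimately show ?thesis by (simp add: path_def)
qed

text \<open>A walk changes direction only at a cut or an interaction, which is exactly where an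
  \<open>ai\<close>-path may be joined.\<close>

lemma walk_ai_path:
  "walk F w \<Longrightarrow> dart_src F (hd w) = Vtx v \<Longrightarrow> dart_tgt F (last w) = Vtx u \<Longrightarrow>
   ai_path F v u (map fst w)"
proof (induction w arbitrary: v u rule: length_induct)
  case (1 w)
  note w = "1.prems"(1)
  show ?case
  proof (cases "\<exists>i. Suc i < length w \<and> snd (w ! i) \<noteq> snd (w ! Suc i)")
    case True
    then obtain i where i: "Suc i < length w" "snd (w ! i) \<noteq> snd (w ! Suc i)" by blast
    obtain t where t: "turn_at F t (w ! i) (w ! Suc i)"
      using walk_nth_turn[OF w i(1)] by (auto simp: turn_def)
    then have lab: "t \<in> fV F" "flab F t \<in> {Interaction, Cut}"
      and edges: "fst (w ! i) \<noteq> fst (w ! Suc i)"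
      using i(2) by (auto simp: turn_at_def turn_ok_def)
    let ?w1 = "take (Suc i) w" and ?w2 = "drop (Suc i) w"
    have walks: "walk F ?w1" "walk F ?w2"
      using walk_take_drop[OF w, of 0 "Suc i"] walk_take_drop[OF w, of "Suc i" "length w"] i by auto
    have ends: "hd ?w1 = hd w" "last ?w1 = w ! i" "hd ?w2 = w ! Suc i" "last ?w2 = last w"
      using i by (simp add: hd_take, simp add: take_Suc_conv_app_nth, simp add: hd_drop_conv_nth, simp)
    have "ai_path F v t (map fst ?w1)" "ai_path F t u (map fst ?w2)"
      using "1.IH" walks ends "1.prems"(2,3) t i by (auto simp: turn_at_def)
    moreover have "last (map fst ?w1) \<noteq> hd (map fst ?w2)"
      using edges ends walks by (simp add: walk_def last_map hd_map del: take_Suc)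
    ultimately have "ai_path F v u (map fst ?w1 @ map fst ?w2)"
      using ai_join lab by blast
    then show ?thesis by (simp flip: map_append)
  next
    case False
    have "snd (w ! j) = snd (w ! 0)" if "j < length w" for j
      using that by (induction j) (use False in auto)
    then have "\<forall>x\<in>set w. snd x = snd (w ! 0)" by (metis in_set_conv_nth)
    then show ?thesis using monotone_walk_path[OF w] "1.prems" ai_base by blast
  qed
qed

lemma closed_walk_edge_distinct:
  "closed_walk F w \<Longrightarrow> \<exists>w'. closed_walk F w' \<and> distinct (map fst w')"
proof (induction w rule: length_induct)
  case (1 w)
  have w: "walk F w" using "1.prems" by (simp add: closed_walk_def)
  show ?case
  proof (cases "distinct (map fst w)")
    case False
    then obtain i j where "i < length w" "j < length w" "i \<noteq> j" "fst (w ! i) = fst (w ! j)"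
      by (auto simp: distinct_conv_nth)
    then obtain i j where ij: "i < j" "j < length w" "fst (w ! i) = fst (w ! j)"
      by (metis nat_neq_iff)
    \<comment> \<open>an edge used twice, in either direction, cuts off a shorter closed walk\<close>
    have "\<exists>i'. i' < j \<and> dart_src F (w ! i') = dart_src F (w ! j)"
    proof (cases "w ! i = w ! j")
      case False
      then have rev: "w ! j = reverse_dart (w ! i)"
        using ij(3) by (cases "w ! i"; cases "w ! j") auto
      have "\<not> turn F (w ! i) (w ! j)"
        using rev by (cases "w ! i") (auto simp: turn_def turn_at_def turn_ok_def)
      then have "Suc i < j" using walk_nth_turn[OF w, of i] ij by (metis Suc_lessI)
      moreover have "dart_tgt F (w ! i) = dart_src F (w ! Suc i)"
        using walk_nth_turn[OF w, of i] ij \<open>Suc i < j\<close> by (auto simp: turn_def turn_at_def)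
      ultimately show ?thesis using rev by auto
    qed (use ij in auto)
    then obtain i' where i': "i' < j" "closed_walk F (take (j - i') (drop i' w))"
      using closed_subwalk[OF w] ij(2) by blast
    moreover have "length (take (j - i') (drop i' w)) < length w" using i' ij(2) by simp
    ultimately show ?thesis using "1.IH" by blast
  qed (use "1.prems" in blast)
qed

definition flow_shape :: "flow \<Rightarrow> bool" where
  "flow_shape F \<longleftrightarrow> finite (fE F)
   \<and> (\<forall>a\<in>fE F. fup F a \<in> {Top} \<union> Vtx ` fV F \<and> flo F a \<in> {Bot} \<union> Vtx ` fV F)
   \<and> (\<forall>w\<in>fV F. card {a\<in>fE F. flo F a = Vtx w} = upper_count (flab F w)
               \<and> card {a\<in>fE F. fup F a = Vtx w} = lower_count (flab F w))"

lemma atomic_flow_shape: "atomic_flow F \<Longrightarrow> flow_shape F"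
  by (simp add: atomic_flow_def flow_shape_def)

lemma cycle_free_no_closed_walk:
  assumes "cycle_free F" "flow_shape F"
  shows "no_closed_walk F"
  unfolding no_closed_walk_def
proof
  assume "\<exists>w. closed_walk F w"
  then obtain w z where w: "walk F w" "dart_src F (hd w) = Vtx z" "dart_tgt F (last w) = Vtx z"
    "distinct (map fst w)"
    using closed_walk_edge_distinct by (metis closed_walk_def)
  have "fst (hd w) \<in> fE F" using w(1) by (cases w) (auto simp: walk_def darts_def)
  then have "z \<in> fV F" using w(2) assms(2)
    by (cases "hd w") (auto simp: flow_shape_def split: if_splits)
  then have "ai_cycle F z (map fst w)" using walk_ai_path[OF w(1-3)] w(4) by (simp add: ai_cycle_def)
  then show False using assms(1) by (auto simp: cycle_free_def)
qed

section \<open>Local rewrite steps\<close>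

lemma card_2_set_eq: "card S = 2 \<Longrightarrow> a \<in> S \<Longrightarrow> b \<in> S \<Longrightarrow> a \<noteq> b \<Longrightarrow> S = {a, b}"
  by (auto simp: card_2_iff)

lemma card_1_set_eq: "card S = 1 \<Longrightarrow> a \<in> S \<Longrightarrow> S = {a}"
  by (auto simp: card_1_singleton_iff)

text \<open>
  The redex vertices \<open>u\<close>, \<open>v\<close> and the edge \<open>r\<close> from \<open>u\<close> down to \<open>v\<close> are replaced by fresh
  vertices \<open>NV\<close> and fresh edges \<open>NE\<close>; \<open>\<sigma>\<close> names the redex vertex that each fresh vertex
  collapses to, and \<open>flip\<close> tells whether the fresh edges collapse onto \<open>r\<close> reversed.
\<close>

locale rewrite_step =
  fixes A B :: flow and u v r :: nat and NV NE :: "nat set" and \<sigma> :: "nat \<Rightarrow> nat"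
    and flip :: bool
  assumes shape_A: "flow_shape A" and no_closed_walk_A: "no_closed_walk A"
    and redex: "u \<in> fV A" "v \<in> fV A" "u \<noteq> v" "r \<in> fE A" "fup A r = Vtx u" "flo A r = Vtx v"
    and fresh: "NV \<inter> fV A = {}" "NE \<inter> fE A = {}" "finite NE" "NE \<noteq> {}"
    and vertices_B: "fV B = fV A - {u, v} \<union> NV"
    and edges_B: "fE B = fE A - {r} \<union> NE"
    and label_B: "\<And>w. w \<in> fV A - {u, v} \<Longrightarrow> flab B w = flab A w"
    and up_kept: "\<And>a. a \<in> fE A - {r} \<Longrightarrow> fup A a \<notin> {Vtx u, Vtx v} \<Longrightarrow> fup B a = fup A a"
    and lo_kept: "\<And>a. a \<in> fE A - {r} \<Longrightarrow> flo A a \<notin> {Vtx u, Vtx v} \<Longrightarrow> flo B a = flo A a"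
    and up_moved: "\<And>a z. a \<in> fE A - {r} \<Longrightarrow> fup A a = Vtx z \<Longrightarrow> z \<in> {u, v} \<Longrightarrow>
       \<exists>w\<in>NV. fup B a = Vtx w \<and> \<sigma> w = z"
    and lo_moved: "\<And>a z. a \<in> fE A - {r} \<Longrightarrow> flo A a = Vtx z \<Longrightarrow> z \<in> {u, v} \<Longrightarrow>
       \<exists>w\<in>NV. flo B a = Vtx w \<and> \<sigma> w = z"
    and new_edges: "\<And>a. a \<in> NE \<Longrightarrow> \<exists>w\<in>NV. \<exists>w'\<in>NV. fup B a = Vtx w \<and> flo B a = Vtx w'
       \<and> Vtx (\<sigma> w) = dart_src A (r, \<not> flip) \<and> Vtx (\<sigma> w') = dart_tgt A (r, \<not> flip)"
begin

definition collapse :: "dart \<Rightarrow> dart" where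
  "collapse x = (if fst x \<in> NE then (r, snd x \<noteq> flip) else x)"

definition collapse_node :: "node \<Rightarrow> node" where
  "collapse_node m = (case m of Vtx w \<Rightarrow> Vtx (if w \<in> NV then \<sigma> w else w) | _ \<Rightarrow> m)"

lemma ends_A: "a \<in> fE A \<Longrightarrow> fup A a \<in> {Top} \<union> Vtx ` fV A \<and> flo A a \<in> {Bot} \<union> Vtx ` fV A"
  using shape_A by (auto simp: flow_shape_def)

lemma up_B_cases:
  assumes "a \<in> fE B"
  shows "fup B a \<in> Vtx ` NV \<and> (a \<in> NE \<or> (a \<in> fE A - {r} \<and> fup A a \<in> {Vtx u, Vtx v}))
    \<or> (a \<in> fE A - {r} \<and> fup B a = fup A a \<and> fup A a \<notin> {Vtx u, Vtx v})"
  using assms new_edges[of a] up_moved[of a] up_kept[of a] unfolding edges_B by fastforce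

lemma lo_B_cases:
  assumes "a \<in> fE B"
  shows "flo B a \<in> Vtx ` NV \<and> (a \<in> NE \<or> (a \<in> fE A - {r} \<and> flo A a \<in> {Vtx u, Vtx v}))
    \<or> (a \<in> fE A - {r} \<and> flo B a = flo A a \<and> flo A a \<notin> {Vtx u, Vtx v})"
  using assms new_edges[of a] lo_moved[of a] lo_kept[of a] unfolding edges_B by fastforce

lemma up_B_new:
  assumes "a \<in> fE B" "fup B a \<in> Vtx ` NV"
  shows "a \<in> NE \<or> a \<in> {b\<in>fE A. fup A b = Vtx u} - {r} \<or> a \<in> {b\<in>fE A. fup A b = Vtx v} - {r}"
proof -
  have "fup A a \<notin> Vtx ` NV" if "a \<in> fE A" using ends_A[OF that] fresh(1) by auto
  then show ?thesis using up_B_cases[OF assms(1)] assms(2) by auto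
qed

lemma lo_B_new:
  assumes "a \<in> fE B" "flo B a \<in> Vtx ` NV"
  shows "a \<in> NE \<or> a \<in> {b\<in>fE A. flo A b = Vtx u} - {r} \<or> a \<in> {b\<in>fE A. flo A b = Vtx v} - {r}"
proof -
  have "flo A a \<notin> Vtx ` NV" if "a \<in> fE A" using ends_A[OF that] fresh(1) by auto
  then show ?thesis using lo_B_cases[OF assms(1)] assms(2) by auto
qed

lemma old_vertex: "w \<in> fV A - {u, v} \<Longrightarrow> w \<in> fV B \<and> w \<notin> NV"
  using fresh vertices_B by auto

lemma up_old_iff:
  assumes "w \<in> fV A - {u, v}"
  shows "a \<in> fE B \<and> fup B a = Vtx w \<longleftrightarrow> a \<in> fE A \<and> fup A a = Vtx w"
  using assms up_B_cases[of a] old_vertex[OF assms] redex up_kept[of a] edges_B by fastforce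

lemma lo_old_iff:
  assumes "w \<in> fV A - {u, v}"
  shows "a \<in> fE B \<and> flo B a = Vtx w \<longleftrightarrow> a \<in> fE A \<and> flo A a = Vtx w"
  using assms lo_B_cases[of a] old_vertex[OF assms] redex lo_kept[of a] edges_B by fastforce

lemma dart_old_iff:
  assumes "w \<in> fV A - {u, v}"
  shows "fst x \<in> fE B \<and> dart_src B x = Vtx w \<longleftrightarrow> fst x \<in> fE A \<and> dart_src A x = Vtx w"
    and "fst x \<in> fE B \<and> dart_tgt B x = Vtx w \<longleftrightarrow> fst x \<in> fE A \<and> dart_tgt A x = Vtx w"
  using up_old_iff[OF assms] lo_old_iff[OF assms] by (cases x; auto)+

lemma turn_at_old_iff:
  assumes "w \<in> fV A - {u, v}"
  shows "turn_at B w x y \<longleftrightarrow> turn_at A w x y"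
proof -
  have "w \<in> fV B" "w \<in> fV A" "flab B w = flab A w"
    using old_vertex[OF assms] label_B[OF assms] assms by auto
  then show ?thesis
    using dart_old_iff(2)[OF assms, of x] dart_old_iff(1)[OF assms, of y] unfolding turn_at_def by auto
qed

lemma turn_B_cases:
  assumes "turn B x y"
  shows "(\<exists>w\<in>fV A - {u, v}. turn_at A w x y) \<or> dart_tgt B x \<in> Vtx ` NV"
proof -
  obtain w where w: "turn_at B w x y" using assms by (auto simp: turn_def)
  then consider "w \<in> fV A - {u, v}" | "w \<in> NV" using vertices_B by (auto simp: turn_at_def)
  then show ?thesis
  proof cases
    case 1 then show ?thesis using w turn_at_old_iff by blast
  next
    case 2 then show ?thesis using w by (auto simp: turn_at_def)
  qed
qed

lemma turn_A_cases:
  assumes "turn A x y"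
  shows "turn B x y \<or> dart_tgt A x \<in> {Vtx u, Vtx v}"
proof -
  obtain w where w: "turn_at A w x y" using assms by (auto simp: turn_def)
  show ?thesis
  proof (cases "w \<in> {u, v}")
    case False
    then have "turn_at B w x y" using w turn_at_old_iff[of w] by (auto simp: turn_at_def)
    then show ?thesis by (auto simp: turn_def)
  qed (use w in \<open>auto simp: turn_at_def\<close>)
qed

lemma ends_B: "a \<in> fE B \<Longrightarrow> fup B a \<in> {Top} \<union> Vtx ` fV B \<and> flo B a \<in> {Bot} \<union> Vtx ` fV B"
proof -
  assume a: "a \<in> fE B"
  have new: "Vtx ` NV \<subseteq> Vtx ` fV B" and old: "Vtx ` (fV A - {u, v}) \<subseteq> Vtx ` fV B"
    using vertices_B by auto
  have "fup B a \<in> Vtx ` NV \<or> fup B a \<in> {Top} \<union> Vtx ` (fV A - {u, v})"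
    using up_B_cases[OF a] ends_A[of a] by auto
  moreover have "flo B a \<in> Vtx ` NV \<or> flo B a \<in> {Bot} \<union> Vtx ` (fV A - {u, v})"
    using lo_B_cases[OF a] ends_A[of a] by auto
  ultimately show ?thesis using new old by blast
qed

lemma flow_shape_B:
  assumes "\<And>w. w \<in> NV \<Longrightarrow> card {a\<in>fE B. flo B a = Vtx w} = upper_count (flab B w)
                             \<and> card {a\<in>fE B. fup B a = Vtx w} = lower_count (flab B w)"
  shows "flow_shape B"
proof -
  have "finite (fE B)" using shape_A fresh edges_B by (simp add: flow_shape_def)
  moreover have "\<forall>w\<in>fV B. card {a\<in>fE B. flo B a = Vtx w} = upper_count (flab B w)
      \<and> card {a\<in>fE B. fup B a = Vtx w} = lower_count (flab B w)"
  proof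
    fix w assume "w \<in> fV B"
    then consider "w \<in> fV A - {u, v}" | "w \<in> NV" using vertices_B by auto
    then show "card {a\<in>fE B. flo B a = Vtx w} = upper_count (flab B w)
      \<and> card {a\<in>fE B. fup B a = Vtx w} = lower_count (flab B w)"
    proof cases
      case 1
      have "{a\<in>fE B. flo B a = Vtx w} = {a\<in>fE A. flo A a = Vtx w}"
        "{a\<in>fE B. fup B a = Vtx w} = {a\<in>fE A. fup A a = Vtx w}"
        using lo_old_iff[OF 1] up_old_iff[OF 1] by blast+
      then show ?thesis using shape_A 1 label_B[OF 1] by (simp add: flow_shape_def)
    qed (rule assms)
  qed
  ultimately show ?thesis using ends_B unfolding flow_shape_def by blast
qed

lemma collapse_old: "fst x \<notin> NE \<Longrightarrow> collapse x = x"
  by (simp add: collapse_def)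

lemma collapse_node_old: "m \<in> {Top, Bot} \<union> Vtx ` fV A \<Longrightarrow> collapse_node m = m"
  using fresh(1) by (cases m) (auto simp: collapse_node_def disjoint_iff)

lemma collapse_up: "a \<in> fE A - {r} \<Longrightarrow> collapse_node (fup B a) = fup A a"
proof (cases "fup A a \<in> {Vtx u, Vtx v}")
  case True
  then obtain z where z: "fup A a = Vtx z" "z \<in> {u, v}" by auto
  moreover assume "a \<in> fE A - {r}"
  ultimately obtain w where "w \<in> NV" "fup B a = Vtx w" "\<sigma> w = z"
    using up_moved by blast
  then show ?thesis using z by (simp add: collapse_node_def)
next
  case False
  moreover assume a: "a \<in> fE A - {r}"
  moreover have "fup A a \<in> {Top, Bot} \<union> Vtx ` fV A" using ends_A[of a] a by auto
  ultimately show ?thesis using up_kept[OF a] collapse_node_old by simp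
qed

lemma collapse_lo: "a \<in> fE A - {r} \<Longrightarrow> collapse_node (flo B a) = flo A a"
proof (cases "flo A a \<in> {Vtx u, Vtx v}")
  case True
  then obtain z where z: "flo A a = Vtx z" "z \<in> {u, v}" by auto
  moreover assume "a \<in> fE A - {r}"
  ultimately obtain w where "w \<in> NV" "flo B a = Vtx w" "\<sigma> w = z"
    using lo_moved by blast
  then show ?thesis using z by (simp add: collapse_node_def)
next
  case False
  moreover assume a: "a \<in> fE A - {r}"
  moreover have "flo A a \<in> {Top, Bot} \<union> Vtx ` fV A" using ends_A[of a] a by auto
  ultimately show ?thesis using lo_kept[OF a] collapse_node_old by simp
qed

lemma collapse_ends:
  assumes "x \<in> darts B"
  shows "dart_src A (collapse x) = collapse_node (dart_src B x)
       \<and> dart_tgt A (collapse x) = collapse_node (dart_tgt B x)"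
proof (cases "fst x \<in> NE")
  case True
  then obtain w w' where w: "fup B (fst x) = Vtx w" "flo B (fst x) = Vtx w'" "w \<in> NV" "w' \<in> NV"
    and \<sigma>: "Vtx (\<sigma> w) = dart_src A (r, \<not> flip)" "Vtx (\<sigma> w') = dart_tgt A (r, \<not> flip)"
    using new_edges by blast
  have "collapse x = (if snd x then (r, \<not> flip) else reverse_dart (r, \<not> flip))"
    using True by (simp add: collapse_def)
  moreover have "collapse_node (fup B (fst x)) = dart_src A (r, \<not> flip)"
    "collapse_node (flo B (fst x)) = dart_tgt A (r, \<not> flip)"
    using w \<sigma> by (simp_all add: collapse_node_def)
  ultimately show ?thesis by (cases x) auto
next
  case False
  then have "fst x \<in> fE A - {r}" using assms unfolding darts_def edges_B mem_Times_iff by blast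
  then show ?thesis
    using False collapse_up collapse_lo by (cases x) (simp add: collapse_def)
qed

lemma r_notin_B: "r \<notin> fE B"
  using edges_B fresh(2) redex(4) by auto

lemma collapse_darts: "x \<in> darts B \<Longrightarrow> collapse x \<in> darts A"
  using redex edges_B by (auto simp: darts_def collapse_def)

lemma collapse_inj_outside_new:
  assumes "x \<in> darts B" "y \<in> darts B" "x \<noteq> y" "collapse x = collapse y"
  shows "fst x \<in> NE"
proof (rule ccontr)
  assume "fst x \<notin> NE"
  then have "x = collapse y" using assms(4) by (simp add: collapse_def)
  then show False
    using assms r_notin_B by (cases "fst y \<in> NE") (auto simp: darts_def collapse_def)
qed

lemma new_dart_ends:
  assumes "fst x \<in> NE"
  shows "dart_src B x \<in> Vtx ` NV \<and> dart_tgt B x \<in> Vtx ` NV"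
proof -
  obtain w w' where "fup B (fst x) = Vtx w" "flo B (fst x) = Vtx w'" "w \<in> NV" "w' \<in> NV"
    using new_edges[OF assms] by blast
  then show ?thesis by (cases x) auto
qed

lemma turn_new_ends:
  assumes "fst x \<in> NE"
  shows "turn B p x \<Longrightarrow> dart_tgt B p \<in> Vtx ` NV" and "turn B x s \<Longrightarrow> dart_tgt B x \<in> Vtx ` NV"
  using new_dart_ends[OF assms] by (auto simp: turn_def turn_at_def)

lemma collapse_turn:
  assumes new_turns: "\<And>x y. turn B x y \<Longrightarrow> dart_tgt B x \<in> Vtx ` NV \<Longrightarrow> turn A (collapse x) (collapse y)"
    and "turn B x y"
  shows "turn A (collapse x) (collapse y)"
proof -
  consider w where "w \<in> fV A - {u, v}" "turn_at A w x y" | "dart_tgt B x \<in> Vtx ` NV"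
    using turn_B_cases[OF assms(2)] by blast
  then show ?thesis
  proof cases
    case 1
    then have "fst x \<notin> NE" "fst y \<notin> NE" using fresh(2) by (auto simp: turn_at_def)
    then show ?thesis using 1 collapse_old by (auto simp: turn_def)
  qed (use new_turns assms(2) in blast)
qed

lemma collapse_turn_type:
  assumes "turn B x y" "fst x \<notin> NE" "dart_tgt B x \<notin> Vtx ` NV"
  shows "turn_type A (collapse x) = turn_type B x"
proof -
  obtain w where w: "w \<in> fV A - {u, v}" "turn_at A w x y"
    using turn_B_cases[OF assms(1)] assms(3) by blast
  then have "dart_tgt B x = Vtx w" "dart_tgt A x = Vtx w"
    using dart_old_iff(2)[OF w(1), of x] by (auto simp: turn_at_def)
  then show ?thesis
    using label_B[OF w(1)] collapse_old assms(2) by (simp add: turn_type_def)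
qed

lemma decreases:
  fixes pre suc :: "dart \<Rightarrow> dart"
  assumes new_turns: "\<And>x y. turn B x y \<Longrightarrow> dart_tgt B x \<in> Vtx ` NV \<Longrightarrow>
        turn A (collapse x) (collapse y) \<and> (fst x \<in> NE \<or> fst y \<in> NE)"
    and lift_pre: "\<And>x y. x \<in> darts B \<Longrightarrow> fst x \<notin> NE \<Longrightarrow> turn A y x \<Longrightarrow>
        dart_tgt A y \<in> {Vtx u, Vtx v} \<Longrightarrow> \<exists>y'. turn B y' x"
    and lift_suc: "\<And>x y. x \<in> darts B \<Longrightarrow> fst x \<notin> NE \<Longrightarrow> turn A x y \<Longrightarrow>
        dart_tgt A x \<in> {Vtx u, Vtx v} \<Longrightarrow> \<exists>y'. turn B x y'"
    and pre_iff: "\<And>x p. fst x \<in> NE \<Longrightarrow> turn B p x \<longleftrightarrow> p = pre x"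
    and suc_iff: "\<And>x s. fst x \<in> NE \<Longrightarrow> turn B x s \<longleftrightarrow> s = suc x"
    and pre_suc_old: "\<And>x. fst x \<in> NE \<Longrightarrow> fst (pre x) \<notin> NE \<and> fst (suc x) \<notin> NE"
    and determined: "\<And>x x'. fst x \<in> NE \<Longrightarrow> fst x' \<in> NE \<Longrightarrow> snd x = snd x' \<Longrightarrow>
        pre x = pre x' \<Longrightarrow> suc x = suc x' \<Longrightarrow> x = x'"
    and types: "\<And>x. fst x \<in> NE \<Longrightarrow> turn_type B (pre x) < turn_type B x
        \<and> turn_type A (pre x) = turn_type B x \<and> turn_type A (collapse x) = turn_type B (pre x)"
    and degrees: "\<And>w. w \<in> NV \<Longrightarrow> card {a\<in>fE B. flo B a = Vtx w} = upper_count (flab B w)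
                             \<and> card {a\<in>fE B. fup B a = Vtx w} = lower_count (flab B w)"
  shows "flow_shape B \<and> no_closed_walk B \<and> inversion_measure B < inversion_measure A"
proof -
  have shape_B: "flow_shape B" by (rule flow_shape_B[OF degrees])
  have "walk_simulation A B collapse collapse_node (NE \<times> UNIV) pre suc"
  proof
    show "finite (fE A)" "finite (fE B)" using shape_A shape_B by (simp_all add: flow_shape_def)
    show "no_closed_walk A" by (rule no_closed_walk_A)
    show "NE \<times> UNIV \<subseteq> darts B" unfolding darts_def edges_B by blast
    show "NE \<times> UNIV \<noteq> {}" using fresh(4) by simp
    show "\<exists>z'. collapse_node (Vtx z) = Vtx z'" for z by (simp add: collapse_node_def)
    fix x y
    show "x \<in> darts B \<Longrightarrow> collapse x \<in> darts A" by (rule collapse_darts)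
    show "x \<in> darts B \<Longrightarrow> dart_src A (collapse x) = collapse_node (dart_src B x)
        \<and> dart_tgt A (collapse x) = collapse_node (dart_tgt B x)" by (rule collapse_ends)
    show "x \<in> darts B \<Longrightarrow> y \<in> darts B \<Longrightarrow> x \<noteq> y \<Longrightarrow> collapse x = collapse y \<Longrightarrow> x \<in> NE \<times> UNIV"
      using collapse_inj_outside_new[of x y] by (cases x) auto
    show "x \<in> NE \<times> UNIV \<Longrightarrow> turn B y x \<longleftrightarrow> y = pre x"
      "x \<in> NE \<times> UNIV \<Longrightarrow> turn B x y \<longleftrightarrow> y = suc x"
      using pre_iff suc_iff by (simp_all add: mem_Times_iff)
    show "x \<in> NE \<times> UNIV \<Longrightarrow> pre x \<notin> NE \<times> UNIV \<and> suc x \<notin> NE \<times> UNIV"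
      using pre_suc_old by (simp add: mem_Times_iff)
    show "x = y" if "x \<in> NE \<times> UNIV" "y \<in> NE \<times> UNIV" "collapse x = collapse y"
      "collapse (pre x) = collapse (pre y)" "collapse (suc x) = collapse (suc y)"
    proof -
      have new: "fst x \<in> NE" "fst y \<in> NE" using that(1,2) by (simp_all add: mem_Times_iff)
      then have "snd x = snd y" using that(3) by (auto simp: collapse_def)
      moreover have "pre x = pre y" "suc x = suc y"
        using that(4,5) collapse_old pre_suc_old[OF new(1)] pre_suc_old[OF new(2)] by simp_all
      ultimately show "x = y" using determined new by blast
    qed
    show "turn B x y \<Longrightarrow> turn A (collapse x) (collapse y)"
      by (rule collapse_turn[OF conjunct1[OF new_turns]])
    show "\<exists>y'. turn B y' x" if "x \<in> darts B" "x \<notin> NE \<times> UNIV" "turn A y (collapse x)"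
    proof -
      have old: "fst x \<notin> NE" using that(2) by (simp add: mem_Times_iff)
      moreover have "turn A y x" using that(3) collapse_old[OF old] by simp
      ultimately show ?thesis using that(1) lift_pre[of x y] turn_A_cases[of y x] by blast
    qed
    show "\<exists>y'. turn B x y'" if "x \<in> darts B" "x \<notin> NE \<times> UNIV" "turn A (collapse x) y"
    proof -
      have old: "fst x \<notin> NE" using that(2) by (simp add: mem_Times_iff)
      moreover have "turn A x y" using that(3) collapse_old[OF old] by simp
      ultimately show ?thesis using that(1) lift_suc[of x y] turn_A_cases[of x y] by blast
    qed
    show "x \<in> NE \<times> UNIV \<Longrightarrow> turn_type B (pre x) < turn_type B x
        \<and> turn_type A (collapse (pre x)) = turn_type B x \<and> turn_type A (collapse x) = turn_type B (pre x)"
      using types pre_suc_old collapse_old by (simp add: mem_Times_iff)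
    show "turn_type A (collapse x) = turn_type B x"
      if "turn B x y" "x \<notin> NE \<times> UNIV" "y \<notin> NE \<times> UNIV"
    proof -
      have "fst x \<notin> NE" "fst y \<notin> NE" using that(2,3) by (simp_all add: mem_Times_iff)
      then show ?thesis using collapse_turn_type[OF that(1)] new_turns[OF that(1)] by blast
    qed
  qed
  then interpret walk_simulation A B collapse collapse_node "NE \<times> UNIV" pre suc .
  show ?thesis using shape_B no_closed_walk_B inversion_measure_less by blast
qed

end

section \<open>The three rewrite rules\<close>

locale c1_redex =
  fixes A B :: flow and g k e1 e2 e e3 n k1 k2 d1 d2 :: nat
  assumes shape_A: "flow_shape A" and no_closed_walk_A: "no_closed_walk A"
    and redex: "g \<in> fV A" "flab A g = Contr" "k \<in> fV A" "flab A k = Cut"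
      "e1 \<in> fE A" "e2 \<in> fE A" "e \<in> fE A" "e3 \<in> fE A" "e1 \<noteq> e2"
      "flo A e1 = Vtx g" "flo A e2 = Vtx g" "fup A e = Vtx g" "flo A e = Vtx k"
      "flo A e3 = Vtx k" "e3 \<noteq> e"
    and fresh: "n \<notin> fV A" "k1 \<notin> fV A" "k2 \<notin> fV A" "distinct [n, k1, k2]"
      "d1 \<notin> fE A" "d2 \<notin> fE A" "d1 \<noteq> d2"
    and result: "agrees B ((fV A - {g, k}) \<union> {n, k1, k2}) ((fE A - {e}) \<union> {d1, d2})
       ((flab A)(n := Cocontr, k1 := Cut, k2 := Cut))
       ((fup A)(d1 := Vtx n, d2 := Vtx n))
       ((flo A)(e1 := Vtx k1, e2 := Vtx k2, e3 := Vtx n, d1 := Vtx k1, d2 := Vtx k2))"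
begin

lemma distinct_names:
  "g \<noteq> k" "e1 \<noteq> e2" "e \<noteq> e1" "e \<noteq> e2" "e1 \<noteq> e3" "e2 \<noteq> e3" "e \<noteq> e3"
  "d1 \<noteq> d2" "d1 \<noteq> e" "d1 \<noteq> e1" "d1 \<noteq> e2" "d1 \<noteq> e3" "d2 \<noteq> e" "d2 \<noteq> e1" "d2 \<noteq> e2" "d2 \<noteq> e3"
  "n \<noteq> g" "n \<noteq> k" "k1 \<noteq> g" "k1 \<noteq> k" "k2 \<noteq> g" "k2 \<noteq> k" "n \<noteq> k1" "n \<noteq> k2" "k1 \<noteq> k2"
  using redex fresh by auto

lemmas neq = distinct_names distinct_names[symmetric]

lemma incidence_A:
  "{a\<in>fE A. flo A a = Vtx g} = {e1, e2}" "{a\<in>fE A. fup A a = Vtx g} = {e}"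
  "{a\<in>fE A. flo A a = Vtx k} = {e, e3}" "{a\<in>fE A. fup A a = Vtx k} = {}"
proof -
  have fin: "finite (fE A)" using shape_A by (simp add: flow_shape_def)
  have deg: "card {a\<in>fE A. flo A a = Vtx g} = 2" "card {a\<in>fE A. fup A a = Vtx g} = 1"
    "card {a\<in>fE A. flo A a = Vtx k} = 2" "card {a\<in>fE A. fup A a = Vtx k} = 0"
    using shape_A redex by (auto simp: flow_shape_def)
  show "{a\<in>fE A. flo A a = Vtx g} = {e1, e2}"
    using card_2_set_eq[OF deg(1), of e1 e2] redex by simp
  show "{a\<in>fE A. flo A a = Vtx k} = {e, e3}"
    using card_2_set_eq[OF deg(3), of e e3] redex by simp
  show "{a\<in>fE A. fup A a = Vtx g} = {e}"
    using card_1_set_eq[OF deg(2), of e] redex by simp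
  show "{a\<in>fE A. fup A a = Vtx k} = {}" using deg fin by simp
qed

lemma B_parts:
  "fV B = fV A - {g, k} \<union> {n, k1, k2}" "fE B = fE A - {e} \<union> {d1, d2}"
  "\<And>w. w \<in> fV B \<Longrightarrow> flab B w = ((flab A)(n := Cocontr, k1 := Cut, k2 := Cut)) w"
  "\<And>a. a \<in> fE B \<Longrightarrow> fup B a = ((fup A)(d1 := Vtx n, d2 := Vtx n)) a"
  "\<And>a. a \<in> fE B \<Longrightarrow> flo B a = ((flo A)(e1 := Vtx k1, e2 := Vtx k2, e3 := Vtx n, d1 := Vtx k1, d2 := Vtx k2)) a"
  using result by (auto simp: agrees_def)

lemma B_edges: "e1 \<in> fE B" "e2 \<in> fE B" "e3 \<in> fE B" "d1 \<in> fE B" "d2 \<in> fE B"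
  using redex neq by (simp_all add: B_parts(2))

lemma B_values:
  "flab B n = Cocontr" "flab B k1 = Cut" "flab B k2 = Cut"
  "fup B d1 = Vtx n" "fup B d2 = Vtx n"
  "flo B e1 = Vtx k1" "flo B e2 = Vtx k2" "flo B e3 = Vtx n" "flo B d1 = Vtx k1" "flo B d2 = Vtx k2"
proof -
  show "flab B n = Cocontr" "flab B k1 = Cut" "flab B k2 = Cut"
    using B_parts(3)[of n] B_parts(3)[of k1] B_parts(3)[of k2] fresh by (simp_all add: B_parts(1))
  show "fup B d1 = Vtx n" "fup B d2 = Vtx n"
    using B_parts(4)[OF B_edges(4)] B_parts(4)[OF B_edges(5)] by simp_all
  show "flo B e1 = Vtx k1" "flo B e2 = Vtx k2" "flo B e3 = Vtx n" "flo B d1 = Vtx k1" "flo B d2 = Vtx k2"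
    using B_parts(5)[OF B_edges(1)] B_parts(5)[OF B_edges(2)] B_parts(5)[OF B_edges(3)]
      B_parts(5)[OF B_edges(4)] B_parts(5)[OF B_edges(5)] neq fresh by simp_all
qed

sublocale step: rewrite_step A B g k e "{n, k1, k2}" "{d1, d2}" "\<lambda>w. if w = n then k else g" True
proof
  show "flow_shape A" "no_closed_walk A" by (fact shape_A no_closed_walk_A)+
  show "g \<in> fV A" "k \<in> fV A" "g \<noteq> k" "e \<in> fE A" "fup A e = Vtx g" "flo A e = Vtx k"
    using redex neq by auto
  show "{n, k1, k2} \<inter> fV A = {}" "{d1, d2} \<inter> fE A = {}" "finite {d1, d2}" "{d1, d2} \<noteq> {}"
    using fresh by auto
  show "fV B = fV A - {g, k} \<union> {n, k1, k2}" "fE B = fE A - {e} \<union> {d1, d2}" by (fact B_parts)+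
  fix a z
  show "a \<in> fV A - {g, k} \<Longrightarrow> flab B a = flab A a"
    using B_parts(1) B_parts(3)[of a] fresh by auto
  show "a \<in> fE A - {e} \<Longrightarrow> fup A a \<notin> {Vtx g, Vtx k} \<Longrightarrow> fup B a = fup A a"
    using B_parts(2) B_parts(4)[of a] fresh by auto
  show "a \<in> fE A - {e} \<Longrightarrow> flo A a \<notin> {Vtx g, Vtx k} \<Longrightarrow> flo B a = flo A a"
    using B_parts(2) B_parts(5)[of a] fresh redex by auto
  show "a \<in> fE A - {e} \<Longrightarrow> fup A a = Vtx z \<Longrightarrow> z \<in> {g, k} \<Longrightarrow>
      \<exists>w\<in>{n, k1, k2}. fup B a = Vtx w \<and> (if w = n then k else g) = z"
    using incidence_A by (auto simp: set_eq_iff)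
  show "\<exists>w\<in>{n, k1, k2}. flo B a = Vtx w \<and> (if w = n then k else g) = z"
    if "a \<in> fE A - {e}" "flo A a = Vtx z" "z \<in> {g, k}"
  proof -
    have "a = e1 \<and> z = g \<or> a = e2 \<and> z = g \<or> a = e3 \<and> z = k"
      using that incidence_A by (auto simp: set_eq_iff)
    then show ?thesis using B_values neq by auto
  qed
  show "a \<in> {d1, d2} \<Longrightarrow> \<exists>w\<in>{n, k1, k2}. \<exists>w'\<in>{n, k1, k2}. fup B a = Vtx w \<and> flo B a = Vtx w'
      \<and> Vtx (if w = n then k else g) = dart_src A (e, \<not> True)
      \<and> Vtx (if w' = n then k else g) = dart_tgt A (e, \<not> True)"
    using B_values redex neq by auto
qed

lemma touched_B:
  assumes "a \<in> fE B"
  shows "fup B a \<in> Vtx ` {n, k1, k2} \<Longrightarrow> a \<in> {d1, d2}"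
    and "flo B a \<in> Vtx ` {n, k1, k2} \<Longrightarrow> a \<in> {e1, e2, e3, d1, d2}"
  using step.up_B_new[OF assms] step.lo_B_new[OF assms] unfolding incidence_A by auto

lemma incidence_B:
  "{a\<in>fE B. flo B a = Vtx n} = {e3}" "{a\<in>fE B. fup B a = Vtx n} = {d1, d2}"
  "{a\<in>fE B. flo B a = Vtx k1} = {e1, d1}" "{a\<in>fE B. fup B a = Vtx k1} = {}"
  "{a\<in>fE B. flo B a = Vtx k2} = {e2, d2}" "{a\<in>fE B. fup B a = Vtx k2} = {}"
proof -
  have lo: "{a\<in>fE B. flo B a = Vtx w} = {a \<in> {e1, e2, e3, d1, d2}. flo B a = Vtx w}"
    and up: "{a\<in>fE B. fup B a = Vtx w} = {a \<in> {d1, d2}. fup B a = Vtx w}" if "w \<in> {n, k1, k2}" for w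
    using touched_B B_edges that by blast+
  show "{a\<in>fE B. flo B a = Vtx n} = {e3}" "{a\<in>fE B. fup B a = Vtx n} = {d1, d2}"
    "{a\<in>fE B. flo B a = Vtx k1} = {e1, d1}" "{a\<in>fE B. fup B a = Vtx k1} = {}"
    "{a\<in>fE B. flo B a = Vtx k2} = {e2, d2}" "{a\<in>fE B. fup B a = Vtx k2} = {}"
    by (simp_all add: lo up) (auto simp: B_values neq)
qed

definition redex_turns_g :: "(dart \<times> dart) set" where
  "redex_turns_g = {((e1, True), (e, True)), ((e2, True), (e, True)),
     ((e, False), (e1, False)), ((e, False), (e2, False))}"

definition redex_turns_k :: "(dart \<times> dart) set" where
  "redex_turns_k = {((e, True), (e3, False)), ((e3, True), (e, False))}"

definition new_turns_n :: "(dart \<times> dart) set" where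
  "new_turns_n = {((e3, True), (d1, True)), ((e3, True), (d2, True)),
     ((d1, False), (e3, False)), ((d2, False), (e3, False))}"

definition new_turns_k1 :: "(dart \<times> dart) set" where
  "new_turns_k1 = {((e1, True), (d1, False)), ((d1, True), (e1, False))}"

definition new_turns_k2 :: "(dart \<times> dart) set" where
  "new_turns_k2 = {((e2, True), (d2, False)), ((d2, True), (e2, False))}"

abbreviation redex_turns :: "(dart \<times> dart) set" where
  "redex_turns \<equiv> redex_turns_g \<union> redex_turns_k"

abbreviation new_turns :: "(dart \<times> dart) set" where
  "new_turns \<equiv> new_turns_n \<union> new_turns_k1 \<union> new_turns_k2"

lemmas redex_turns_defs = redex_turns_g_def redex_turns_k_def
lemmas new_turns_defs = new_turns_n_def new_turns_k1_def new_turns_k2_def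

lemma turns_at_redex:
  "turn_at A g x y \<longleftrightarrow> (x, y) \<in> redex_turns_g" "turn_at A k x y \<longleftrightarrow> (x, y) \<in> redex_turns_k"
  unfolding redex_turns_defs
  by (cases x; cases y; auto simp: turn_at_Pair_iff incidence_A turn_ok_def redex neq split: if_splits)+

lemma turns_at_new:
  "turn_at B n x y \<longleftrightarrow> (x, y) \<in> new_turns_n" "turn_at B k1 x y \<longleftrightarrow> (x, y) \<in> new_turns_k1"
  "turn_at B k2 x y \<longleftrightarrow> (x, y) \<in> new_turns_k2"
  unfolding new_turns_defs
  by (cases x; cases y; auto simp: turn_at_Pair_iff incidence_B turn_ok_def B_parts(1) B_values neq
      split: if_splits)+

lemma redex_turns_turn: "(x, y) \<in> redex_turns \<Longrightarrow> turn A x y"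
  using turns_at_redex unfolding turn_def by blast

lemma turn_A_at_redex:
  "turn A x y \<Longrightarrow> dart_tgt A x \<in> {Vtx g, Vtx k} \<Longrightarrow> (x, y) \<in> redex_turns"
  using turn_via_tgt[of A x g y] turn_via_tgt[of A x k y] turns_at_redex by blast

lemma new_turns_turn: "(x, y) \<in> new_turns \<Longrightarrow> turn B x y"
  using turns_at_new unfolding turn_def by blast

lemma turn_B_at_new:
  "turn B x y \<Longrightarrow> dart_tgt B x \<in> Vtx ` {n, k1, k2} \<Longrightarrow> (x, y) \<in> new_turns"
  using turn_via_tgt[of B x n y] turn_via_tgt[of B x k1 y] turn_via_tgt[of B x k2 y] turns_at_new by blast

lemma new_turn_witnesses:
  "turn B (d1, True) (e1, False)" "turn B (d2, True) (e2, False)" "turn B (d1, False) (e3, False)"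
  "turn B (e1, True) (d1, False)" "turn B (e2, True) (d2, False)" "turn B (e3, True) (d1, True)"
  using new_turns_turn unfolding new_turns_defs by simp_all

definition pre :: "dart \<Rightarrow> dart" where
  "pre x = (if snd x then (e3, True) else if fst x = d1 then (e1, True) else (e2, True))"

definition suc :: "dart \<Rightarrow> dart" where
  "suc x = (if snd x then if fst x = d1 then (e1, False) else (e2, False) else (e3, False))"

lemma collapse_new_turn:
  assumes "turn B x y" "dart_tgt B x \<in> Vtx ` {n, k1, k2}"
  shows "turn A (step.collapse x) (step.collapse y) \<and> (fst x \<in> {d1, d2} \<or> fst y \<in> {d1, d2})"
proof -
  have "(x, y) \<in> new_turns" by (rule turn_B_at_new[OF assms])
  then have "(step.collapse x, step.collapse y) \<in> redex_turns
      \<and> (fst x \<in> {d1, d2} \<or> fst y \<in> {d1, d2})"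
    unfolding new_turns_defs redex_turns_defs
    by (elim UnE insertE emptyE) (simp_all add: step.collapse_def neq)
  then show ?thesis using redex_turns_turn by blast
qed

lemma lift_pre:
  assumes "x \<in> darts B" "fst x \<notin> {d1, d2}" "turn A y x" "dart_tgt A y \<in> {Vtx g, Vtx k}"
  shows "\<exists>y'. turn B y' x"
proof -
  have "fst x \<noteq> e" using assms(1) step.r_notin_B by (auto simp: darts_def)
  then have "x \<in> {(e1, False), (e2, False), (e3, False)}"
    using turn_A_at_redex[OF assms(3,4)] assms(2) unfolding redex_turns_defs by auto
  then show ?thesis using new_turn_witnesses by blast
qed

lemma lift_suc:
  assumes "x \<in> darts B" "fst x \<notin> {d1, d2}" "turn A x y" "dart_tgt A x \<in> {Vtx g, Vtx k}"
  shows "\<exists>y'. turn B x y'"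
proof -
  have "fst x \<noteq> e" using assms(1) step.r_notin_B by (auto simp: darts_def)
  then have "x \<in> {(e1, True), (e2, True), (e3, True)}"
    using turn_A_at_redex[OF assms(3,4)] assms(2) unfolding redex_turns_defs by auto
  then show ?thesis using new_turn_witnesses by blast
qed

lemma new_dart_cases:
  "fst x \<in> {d1, d2} \<Longrightarrow>
   x = (d1, True) \<or> x = (d2, True) \<or> x = (d1, False) \<or> x = (d2, False)"
  by (cases x) auto

lemma pre_iff:
  assumes "fst x \<in> {d1, d2}"
  shows "turn B p x \<longleftrightarrow> p = pre x"
proof -
  have "(p, x) \<in> new_turns \<longleftrightarrow> p = pre x"
    using new_dart_cases[OF assms] unfolding new_turns_defs by (elim disjE) (simp_all add: pre_def neq)
  then show ?thesis
    using turn_B_at_new[of p x] new_turns_turn[of p x] step.turn_new_ends(1)[OF assms, of p] by blast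
qed

lemma suc_iff:
  assumes "fst x \<in> {d1, d2}"
  shows "turn B x s \<longleftrightarrow> s = suc x"
proof -
  have "(x, s) \<in> new_turns \<longleftrightarrow> s = suc x"
    using new_dart_cases[OF assms] unfolding new_turns_defs by (elim disjE) (simp_all add: suc_def neq)
  then show ?thesis
    using turn_B_at_new[of x s] new_turns_turn[of x s] step.turn_new_ends(2)[OF assms, of s] by blast
qed

lemma pre_suc_old: "fst (pre x) \<notin> {d1, d2} \<and> fst (suc x) \<notin> {d1, d2}"
  using neq by (simp add: pre_def suc_def)

lemma new_dart_determined:
  assumes "fst x \<in> {d1, d2}" "fst y \<in> {d1, d2}" "snd x = snd y" "pre x = pre y" "suc x = suc y"
  shows "x = y"
  using new_dart_cases[OF assms(1)] new_dart_cases[OF assms(2)] assms(3-5)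
  by (elim disjE) (simp_all add: pre_def suc_def neq)

lemma turn_types:
  "fst x \<in> {d1, d2} \<Longrightarrow> turn_type B (pre x) < turn_type B x \<and> turn_type A (pre x) = turn_type B x
     \<and> turn_type A (step.collapse x) = turn_type B (pre x)"
  by (drule new_dart_cases, elim disjE)
    (simp_all add: pre_def turn_type_def step.collapse_def redex B_values neq)

lemma degrees_B:
  "w \<in> {n, k1, k2} \<Longrightarrow> card {a\<in>fE B. flo B a = Vtx w} = upper_count (flab B w)
     \<and> card {a\<in>fE B. fup B a = Vtx w} = lower_count (flab B w)"
  by (auto simp: incidence_B B_values neq)

lemma decreases: "flow_shape B \<and> no_closed_walk B \<and> inversion_measure B < inversion_measure A"
  by (rule step.decreases[OF collapse_new_turn lift_pre lift_suc pre_iff suc_iff pre_suc_old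
        new_dart_determined turn_types degrees_B])

end

locale c2_redex =
  fixes A B :: flow and i k e1 e2 e3 e4 g i1 i2 d1 d2 :: nat
  assumes shape_A: "flow_shape A" and no_closed_walk_A: "no_closed_walk A"
    and redex: "i \<in> fV A" "flab A i = Interaction" "k \<in> fV A" "flab A k = Cocontr"
      "e1 \<in> fE A" "e2 \<in> fE A" "e3 \<in> fE A" "e4 \<in> fE A"
      "fup A e3 = Vtx i" "fup A e4 = Vtx i" "e3 \<noteq> e4" "flo A e4 = Vtx k"
      "fup A e1 = Vtx k" "fup A e2 = Vtx k" "e1 \<noteq> e2"
    and fresh: "g \<notin> fV A" "i1 \<notin> fV A" "i2 \<notin> fV A" "distinct [g, i1, i2]"
      "d1 \<notin> fE A" "d2 \<notin> fE A" "d1 \<noteq> d2"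
    and result: "agrees B ((fV A - {i, k}) \<union> {g, i1, i2}) ((fE A - {e4}) \<union> {d1, d2})
       ((flab A)(g := Contr, i1 := Interaction, i2 := Interaction))
       ((fup A)(e3 := Vtx g, e1 := Vtx i1, e2 := Vtx i2, d1 := Vtx i1, d2 := Vtx i2))
       ((flo A)(d1 := Vtx g, d2 := Vtx g))"
begin

lemma distinct_names:
  "i \<noteq> k" "e1 \<noteq> e2" "e3 \<noteq> e4" "e4 \<noteq> e1" "e4 \<noteq> e2" "e3 \<noteq> e1" "e3 \<noteq> e2"
  "d1 \<noteq> d2" "d1 \<noteq> e1" "d1 \<noteq> e2" "d1 \<noteq> e3" "d1 \<noteq> e4" "d2 \<noteq> e1" "d2 \<noteq> e2" "d2 \<noteq> e3" "d2 \<noteq> e4"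
  "g \<noteq> i" "g \<noteq> k" "i1 \<noteq> i" "i1 \<noteq> k" "i2 \<noteq> i" "i2 \<noteq> k" "g \<noteq> i1" "g \<noteq> i2" "i1 \<noteq> i2"
  using redex fresh by auto

lemmas neq = distinct_names distinct_names[symmetric]

lemma incidence_A:
  "{a\<in>fE A. fup A a = Vtx i} = {e3, e4}" "{a\<in>fE A. flo A a = Vtx i} = {}"
  "{a\<in>fE A. flo A a = Vtx k} = {e4}" "{a\<in>fE A. fup A a = Vtx k} = {e1, e2}"
proof -
  have fin: "finite (fE A)" using shape_A by (simp add: flow_shape_def)
  have deg: "card {a\<in>fE A. fup A a = Vtx i} = 2" "card {a\<in>fE A. flo A a = Vtx i} = 0"
    "card {a\<in>fE A. flo A a = Vtx k} = 1" "card {a\<in>fE A. fup A a = Vtx k} = 2"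
    using shape_A redex by (auto simp: flow_shape_def)
  show "{a\<in>fE A. fup A a = Vtx i} = {e3, e4}"
    using card_2_set_eq[OF deg(1), of e3 e4] redex by simp
  show "{a\<in>fE A. fup A a = Vtx k} = {e1, e2}"
    using card_2_set_eq[OF deg(4), of e1 e2] redex by simp
  show "{a\<in>fE A. flo A a = Vtx k} = {e4}"
    using card_1_set_eq[OF deg(3), of e4] redex by simp
  show "{a\<in>fE A. flo A a = Vtx i} = {}" using deg fin by simp
qed

lemma B_parts:
  "fV B = fV A - {i, k} \<union> {g, i1, i2}" "fE B = fE A - {e4} \<union> {d1, d2}"
  "\<And>w. w \<in> fV B \<Longrightarrow> flab B w = ((flab A)(g := Contr, i1 := Interaction, i2 := Interaction)) w"
  "\<And>a. a \<in> fE B \<Longrightarrow>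
     fup B a = ((fup A)(e3 := Vtx g, e1 := Vtx i1, e2 := Vtx i2, d1 := Vtx i1, d2 := Vtx i2)) a"
  "\<And>a. a \<in> fE B \<Longrightarrow> flo B a = ((flo A)(d1 := Vtx g, d2 := Vtx g)) a"
  using result by (auto simp: agrees_def)

lemma B_edges: "e1 \<in> fE B" "e2 \<in> fE B" "e3 \<in> fE B" "d1 \<in> fE B" "d2 \<in> fE B"
  using redex neq by (simp_all add: B_parts(2))

lemma B_values:
  "flab B g = Contr" "flab B i1 = Interaction" "flab B i2 = Interaction"
  "fup B e3 = Vtx g" "fup B e1 = Vtx i1" "fup B e2 = Vtx i2" "fup B d1 = Vtx i1" "fup B d2 = Vtx i2"
  "flo B d1 = Vtx g" "flo B d2 = Vtx g"
proof -
  show "flab B g = Contr" "flab B i1 = Interaction" "flab B i2 = Interaction"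
    using B_parts(3)[of g] B_parts(3)[of i1] B_parts(3)[of i2] fresh by (simp_all add: B_parts(1))
  show "fup B e3 = Vtx g" "fup B e1 = Vtx i1" "fup B e2 = Vtx i2" "fup B d1 = Vtx i1" "fup B d2 = Vtx i2"
    using B_parts(4)[OF B_edges(1)] B_parts(4)[OF B_edges(2)] B_parts(4)[OF B_edges(3)]
      B_parts(4)[OF B_edges(4)] B_parts(4)[OF B_edges(5)] neq by simp_all
  show "flo B d1 = Vtx g" "flo B d2 = Vtx g"
    using B_parts(5)[OF B_edges(4)] B_parts(5)[OF B_edges(5)] by simp_all
qed

sublocale step: rewrite_step A B i k e4 "{g, i1, i2}" "{d1, d2}" "\<lambda>w. if w = g then i else k" True
proof
  show "flow_shape A" "no_closed_walk A" by (fact shape_A no_closed_walk_A)+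
  show "i \<in> fV A" "k \<in> fV A" "i \<noteq> k" "e4 \<in> fE A" "fup A e4 = Vtx i" "flo A e4 = Vtx k"
    using redex neq by auto
  show "{g, i1, i2} \<inter> fV A = {}" "{d1, d2} \<inter> fE A = {}" "finite {d1, d2}" "{d1, d2} \<noteq> {}"
    using fresh by auto
  show "fV B = fV A - {i, k} \<union> {g, i1, i2}" "fE B = fE A - {e4} \<union> {d1, d2}" by (fact B_parts)+
  fix a z
  show "a \<in> fV A - {i, k} \<Longrightarrow> flab B a = flab A a"
    using B_parts(1) B_parts(3)[of a] fresh by auto
  show "a \<in> fE A - {e4} \<Longrightarrow> fup A a \<notin> {Vtx i, Vtx k} \<Longrightarrow> fup B a = fup A a"
    using B_parts(2) B_parts(4)[of a] fresh redex by auto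
  show "a \<in> fE A - {e4} \<Longrightarrow> flo A a \<notin> {Vtx i, Vtx k} \<Longrightarrow> flo B a = flo A a"
    using B_parts(2) B_parts(5)[of a] fresh by auto
  show "\<exists>w\<in>{g, i1, i2}. fup B a = Vtx w \<and> (if w = g then i else k) = z"
    if "a \<in> fE A - {e4}" "fup A a = Vtx z" "z \<in> {i, k}"
  proof -
    have "a = e3 \<and> z = i \<or> a = e1 \<and> z = k \<or> a = e2 \<and> z = k"
      using that incidence_A by (auto simp: set_eq_iff)
    then show ?thesis using B_values neq by auto
  qed
  show "a \<in> fE A - {e4} \<Longrightarrow> flo A a = Vtx z \<Longrightarrow> z \<in> {i, k} \<Longrightarrow>
      \<exists>w\<in>{g, i1, i2}. flo B a = Vtx w \<and> (if w = g then i else k) = z"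
    using incidence_A by (auto simp: set_eq_iff)
  show "a \<in> {d1, d2} \<Longrightarrow> \<exists>w\<in>{g, i1, i2}. \<exists>w'\<in>{g, i1, i2}. fup B a = Vtx w \<and> flo B a = Vtx w'
      \<and> Vtx (if w = g then i else k) = dart_src A (e4, \<not> True)
      \<and> Vtx (if w' = g then i else k) = dart_tgt A (e4, \<not> True)"
    using B_values redex neq by auto
qed

lemma touched_B:
  assumes "a \<in> fE B"
  shows "fup B a \<in> Vtx ` {g, i1, i2} \<Longrightarrow> a \<in> {e1, e2, e3, d1, d2}"
    and "flo B a \<in> Vtx ` {g, i1, i2} \<Longrightarrow> a \<in> {d1, d2}"
  using step.up_B_new[OF assms] step.lo_B_new[OF assms] unfolding incidence_A by auto

lemma incidence_B:
  "{a\<in>fE B. flo B a = Vtx g} = {d1, d2}" "{a\<in>fE B. fup B a = Vtx g} = {e3}"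
  "{a\<in>fE B. flo B a = Vtx i1} = {}" "{a\<in>fE B. fup B a = Vtx i1} = {e1, d1}"
  "{a\<in>fE B. flo B a = Vtx i2} = {}" "{a\<in>fE B. fup B a = Vtx i2} = {e2, d2}"
proof -
  have lo: "{a\<in>fE B. flo B a = Vtx w} = {a \<in> {d1, d2}. flo B a = Vtx w}"
    and up: "{a\<in>fE B. fup B a = Vtx w} = {a \<in> {e1, e2, e3, d1, d2}. fup B a = Vtx w}"
    if "w \<in> {g, i1, i2}" for w
    using touched_B B_edges that by blast+
  show "{a\<in>fE B. flo B a = Vtx g} = {d1, d2}" "{a\<in>fE B. fup B a = Vtx g} = {e3}"
    "{a\<in>fE B. flo B a = Vtx i1} = {}" "{a\<in>fE B. fup B a = Vtx i1} = {e1, d1}"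
    "{a\<in>fE B. flo B a = Vtx i2} = {}" "{a\<in>fE B. fup B a = Vtx i2} = {e2, d2}"
    by (simp_all add: lo up) (auto simp: B_values neq)
qed

definition redex_turns_i :: "(dart \<times> dart) set" where
  "redex_turns_i = {((e3, False), (e4, True)), ((e4, False), (e3, True))}"

definition redex_turns_k :: "(dart \<times> dart) set" where
  "redex_turns_k = {((e4, True), (e1, True)), ((e4, True), (e2, True)),
     ((e1, False), (e4, False)), ((e2, False), (e4, False))}"

definition new_turns_g :: "(dart \<times> dart) set" where
  "new_turns_g = {((d1, True), (e3, True)), ((d2, True), (e3, True)),
     ((e3, False), (d1, False)), ((e3, False), (d2, False))}"

definition new_turns_i1 :: "(dart \<times> dart) set" where
  "new_turns_i1 = {((d1, False), (e1, True)), ((e1, False), (d1, True))}"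

definition new_turns_i2 :: "(dart \<times> dart) set" where
  "new_turns_i2 = {((d2, False), (e2, True)), ((e2, False), (d2, True))}"

abbreviation redex_turns :: "(dart \<times> dart) set" where
  "redex_turns \<equiv> redex_turns_i \<union> redex_turns_k"

abbreviation new_turns :: "(dart \<times> dart) set" where
  "new_turns \<equiv> new_turns_g \<union> new_turns_i1 \<union> new_turns_i2"

lemmas redex_turns_defs = redex_turns_i_def redex_turns_k_def
lemmas new_turns_defs = new_turns_g_def new_turns_i1_def new_turns_i2_def

lemma turns_at_redex:
  "turn_at A i x y \<longleftrightarrow> (x, y) \<in> redex_turns_i" "turn_at A k x y \<longleftrightarrow> (x, y) \<in> redex_turns_k"
  unfolding redex_turns_defs
  by (cases x; cases y; auto simp: turn_at_Pair_iff incidence_A turn_ok_def redex neq split: if_splits)+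

lemma turns_at_new:
  "turn_at B g x y \<longleftrightarrow> (x, y) \<in> new_turns_g" "turn_at B i1 x y \<longleftrightarrow> (x, y) \<in> new_turns_i1"
  "turn_at B i2 x y \<longleftrightarrow> (x, y) \<in> new_turns_i2"
  unfolding new_turns_defs
  by (cases x; cases y; auto simp: turn_at_Pair_iff incidence_B turn_ok_def B_parts(1) B_values neq
      split: if_splits)+

lemma redex_turns_turn: "(x, y) \<in> redex_turns \<Longrightarrow> turn A x y"
  using turns_at_redex unfolding turn_def by blast

lemma turn_A_at_redex:
  "turn A x y \<Longrightarrow> dart_tgt A x \<in> {Vtx i, Vtx k} \<Longrightarrow> (x, y) \<in> redex_turns"
  using turn_via_tgt[of A x i y] turn_via_tgt[of A x k y] turns_at_redex by blast

lemma new_turns_turn: "(x, y) \<in> new_turns \<Longrightarrow> turn B x y"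
  using turns_at_new unfolding turn_def by blast

lemma turn_B_at_new:
  "turn B x y \<Longrightarrow> dart_tgt B x \<in> Vtx ` {g, i1, i2} \<Longrightarrow> (x, y) \<in> new_turns"
  using turn_via_tgt[of B x g y] turn_via_tgt[of B x i1 y] turn_via_tgt[of B x i2 y] turns_at_new by blast

lemma new_turn_witnesses:
  "turn B (d1, True) (e3, True)" "turn B (d1, False) (e1, True)" "turn B (d2, False) (e2, True)"
  "turn B (e3, False) (d1, False)" "turn B (e1, False) (d1, True)" "turn B (e2, False) (d2, True)"
  using new_turns_turn unfolding new_turns_defs by simp_all

definition pre :: "dart \<Rightarrow> dart" where
  "pre x = (if snd x then if fst x = d1 then (e1, False) else (e2, False) else (e3, False))"

definition suc :: "dart \<Rightarrow> dart" where
  "suc x = (if snd x then (e3, True) else if fst x = d1 then (e1, True) else (e2, True))"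

lemma collapse_new_turn:
  assumes "turn B x y" "dart_tgt B x \<in> Vtx ` {g, i1, i2}"
  shows "turn A (step.collapse x) (step.collapse y) \<and> (fst x \<in> {d1, d2} \<or> fst y \<in> {d1, d2})"
proof -
  have "(x, y) \<in> new_turns" by (rule turn_B_at_new[OF assms])
  then have "(step.collapse x, step.collapse y) \<in> redex_turns
      \<and> (fst x \<in> {d1, d2} \<or> fst y \<in> {d1, d2})"
    unfolding new_turns_defs redex_turns_defs
    by (elim UnE insertE emptyE) (simp_all add: step.collapse_def neq)
  then show ?thesis using redex_turns_turn by blast
qed

lemma lift_pre:
  assumes "x \<in> darts B" "fst x \<notin> {d1, d2}" "turn A y x" "dart_tgt A y \<in> {Vtx i, Vtx k}"
  shows "\<exists>y'. turn B y' x"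
proof -
  have "fst x \<noteq> e4" using assms(1) step.r_notin_B by (auto simp: darts_def)
  then have "x \<in> {(e3, True), (e1, True), (e2, True)}"
    using turn_A_at_redex[OF assms(3,4)] assms(2) unfolding redex_turns_defs by auto
  then show ?thesis using new_turn_witnesses by blast
qed

lemma lift_suc:
  assumes "x \<in> darts B" "fst x \<notin> {d1, d2}" "turn A x y" "dart_tgt A x \<in> {Vtx i, Vtx k}"
  shows "\<exists>y'. turn B x y'"
proof -
  have "fst x \<noteq> e4" using assms(1) step.r_notin_B by (auto simp: darts_def)
  then have "x \<in> {(e3, False), (e1, False), (e2, False)}"
    using turn_A_at_redex[OF assms(3,4)] assms(2) unfolding redex_turns_defs by auto
  then show ?thesis using new_turn_witnesses by blast
qed

lemma new_dart_cases:
  "fst x \<in> {d1, d2} \<Longrightarrow>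
   x = (d1, True) \<or> x = (d2, True) \<or> x = (d1, False) \<or> x = (d2, False)"
  by (cases x) auto

lemma pre_iff:
  assumes "fst x \<in> {d1, d2}"
  shows "turn B p x \<longleftrightarrow> p = pre x"
proof -
  have "(p, x) \<in> new_turns \<longleftrightarrow> p = pre x"
    using new_dart_cases[OF assms] unfolding new_turns_defs by (elim disjE) (simp_all add: pre_def neq)
  then show ?thesis
    using turn_B_at_new[of p x] new_turns_turn[of p x] step.turn_new_ends(1)[OF assms, of p] by blast
qed

lemma suc_iff:
  assumes "fst x \<in> {d1, d2}"
  shows "turn B x s \<longleftrightarrow> s = suc x"
proof -
  have "(x, s) \<in> new_turns \<longleftrightarrow> s = suc x"
    using new_dart_cases[OF assms] unfolding new_turns_defs by (elim disjE) (simp_all add: suc_def neq)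
  then show ?thesis
    using turn_B_at_new[of x s] new_turns_turn[of x s] step.turn_new_ends(2)[OF assms, of s] by blast
qed

lemma pre_suc_old: "fst (pre x) \<notin> {d1, d2} \<and> fst (suc x) \<notin> {d1, d2}"
  using neq by (simp add: pre_def suc_def)

lemma new_dart_determined:
  assumes "fst x \<in> {d1, d2}" "fst y \<in> {d1, d2}" "snd x = snd y" "pre x = pre y" "suc x = suc y"
  shows "x = y"
  using new_dart_cases[OF assms(1)] new_dart_cases[OF assms(2)] assms(3-5)
  by (elim disjE) (simp_all add: pre_def suc_def neq)

lemma turn_types:
  "fst x \<in> {d1, d2} \<Longrightarrow> turn_type B (pre x) < turn_type B x \<and> turn_type A (pre x) = turn_type B x
     \<and> turn_type A (step.collapse x) = turn_type B (pre x)"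
  by (drule new_dart_cases, elim disjE)
    (simp_all add: pre_def turn_type_def step.collapse_def redex B_values neq)

lemma degrees_B:
  "w \<in> {g, i1, i2} \<Longrightarrow> card {a\<in>fE B. flo B a = Vtx w} = upper_count (flab B w)
     \<and> card {a\<in>fE B. fup B a = Vtx w} = lower_count (flab B w)"
  by (auto simp: incidence_B B_values neq)

lemma decreases: "flow_shape B \<and> no_closed_walk B \<and> inversion_measure B < inversion_measure A"
  by (rule step.decreases[OF collapse_new_turn lift_pre lift_suc pre_iff suc_iff pre_suc_old
        new_dart_determined turn_types degrees_B])

end

locale c3_redex =
  fixes A B :: flow and g k e1 e2 e e3 e4 k1 k2 g3 g4 f13 f14 f23 f24 :: nat
  assumes shape_A: "flow_shape A" and no_closed_walk_A: "no_closed_walk A"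
    and redex: "g \<in> fV A" "flab A g = Contr" "k \<in> fV A" "flab A k = Cocontr"
      "e1 \<in> fE A" "e2 \<in> fE A" "e \<in> fE A" "e3 \<in> fE A" "e4 \<in> fE A"
      "flo A e1 = Vtx g" "flo A e2 = Vtx g" "e1 \<noteq> e2" "fup A e = Vtx g" "flo A e = Vtx k"
      "fup A e3 = Vtx k" "fup A e4 = Vtx k" "e3 \<noteq> e4"
    and fresh: "k1 \<notin> fV A" "k2 \<notin> fV A" "g3 \<notin> fV A" "g4 \<notin> fV A" "distinct [k1, k2, g3, g4]"
      "f13 \<notin> fE A" "f14 \<notin> fE A" "f23 \<notin> fE A" "f24 \<notin> fE A" "distinct [f13, f14, f23, f24]"
    and result: "agrees B ((fV A - {g, k}) \<union> {k1, k2, g3, g4}) ((fE A - {e}) \<union> {f13, f14, f23, f24})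
       ((flab A)(k1 := Cocontr, k2 := Cocontr, g3 := Contr, g4 := Contr))
       ((fup A)(e3 := Vtx g3, e4 := Vtx g4, f13 := Vtx k1, f14 := Vtx k1, f23 := Vtx k2, f24 := Vtx k2))
       ((flo A)(e1 := Vtx k1, e2 := Vtx k2, f13 := Vtx g3, f14 := Vtx g4, f23 := Vtx g3, f24 := Vtx g4))"
begin

lemma incidence_A:
  "{a\<in>fE A. flo A a = Vtx g} = {e1, e2}" "{a\<in>fE A. fup A a = Vtx g} = {e}"
  "{a\<in>fE A. flo A a = Vtx k} = {e}" "{a\<in>fE A. fup A a = Vtx k} = {e3, e4}"
proof -
  have deg: "card {a\<in>fE A. flo A a = Vtx g} = 2" "card {a\<in>fE A. fup A a = Vtx g} = 1"
    "card {a\<in>fE A. flo A a = Vtx k} = 1" "card {a\<in>fE A. fup A a = Vtx k} = 2"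
    using shape_A redex by (auto simp: flow_shape_def)
  show "{a\<in>fE A. flo A a = Vtx g} = {e1, e2}"
    using card_2_set_eq[OF deg(1), of e1 e2] redex by simp
  show "{a\<in>fE A. fup A a = Vtx k} = {e3, e4}"
    using card_2_set_eq[OF deg(4), of e3 e4] redex by simp
  show "{a\<in>fE A. fup A a = Vtx g} = {e}"
    using card_1_set_eq[OF deg(2), of e] redex by simp
  show "{a\<in>fE A. flo A a = Vtx k} = {e}"
    using card_1_set_eq[OF deg(3), of e] redex by simp
qed

lemma distinct_names:
  "g \<noteq> k" "e1 \<noteq> e2" "e3 \<noteq> e4" "e \<noteq> e1" "e \<noteq> e2" "e \<noteq> e3" "e \<noteq> e4" "e1 \<noteq> e3" "e1 \<noteq> e4" "e2 \<noteq> e3" "e2 \<noteq> e4"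
  "f13 \<noteq> e" "f13 \<noteq> e1" "f13 \<noteq> e2" "f13 \<noteq> e3" "f13 \<noteq> e4"
  "f14 \<noteq> e" "f14 \<noteq> e1" "f14 \<noteq> e2" "f14 \<noteq> e3" "f14 \<noteq> e4"
  "f23 \<noteq> e" "f23 \<noteq> e1" "f23 \<noteq> e2" "f23 \<noteq> e3" "f23 \<noteq> e4"
  "f24 \<noteq> e" "f24 \<noteq> e1" "f24 \<noteq> e2" "f24 \<noteq> e3" "f24 \<noteq> e4"
  "f13 \<noteq> f14" "f13 \<noteq> f23" "f13 \<noteq> f24" "f14 \<noteq> f23" "f14 \<noteq> f24" "f23 \<noteq> f24"
  "k1 \<noteq> g" "k1 \<noteq> k" "k2 \<noteq> g" "k2 \<noteq> k" "g3 \<noteq> g" "g3 \<noteq> k" "g4 \<noteq> g" "g4 \<noteq> k"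
  "k1 \<noteq> k2" "k1 \<noteq> g3" "k1 \<noteq> g4" "k2 \<noteq> g3" "k2 \<noteq> g4" "g3 \<noteq> g4"
proof -
  have t: "turn A (e, True) (e3, True)" "turn A (e, True) (e4, True)"
    using redex by (auto simp: turn_def turn_at_def turn_ok_def)
  text \<open>An edge from \<open>k\<close> back up to \<open>g\<close> would close a walk through \<open>e\<close>.\<close>
  show "e1 \<noteq> e3" "e1 \<noteq> e4" "e2 \<noteq> e3" "e2 \<noteq> e4"
    using no_closed_walk_turn[OF no_closed_walk_A t(1)] no_closed_walk_turn[OF no_closed_walk_A t(2)] redex
    by auto
qed (use redex fresh in auto)

lemmas neq = distinct_names distinct_names[symmetric]

lemma B_parts:
  "fV B = fV A - {g, k} \<union> {k1, k2, g3, g4}" "fE B = fE A - {e} \<union> {f13, f14, f23, f24}"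
  "\<And>w. w \<in> fV B \<Longrightarrow> flab B w = ((flab A)(k1 := Cocontr, k2 := Cocontr, g3 := Contr, g4 := Contr)) w"
  "\<And>a. a \<in> fE B \<Longrightarrow> fup B a = ((fup A)(e3 := Vtx g3, e4 := Vtx g4,
      f13 := Vtx k1, f14 := Vtx k1, f23 := Vtx k2, f24 := Vtx k2)) a"
  "\<And>a. a \<in> fE B \<Longrightarrow> flo B a = ((flo A)(e1 := Vtx k1, e2 := Vtx k2,
      f13 := Vtx g3, f14 := Vtx g4, f23 := Vtx g3, f24 := Vtx g4)) a"
  using result by (auto simp: agrees_def)

lemma B_edges:
  "e1 \<in> fE B" "e2 \<in> fE B" "e3 \<in> fE B" "e4 \<in> fE B" "f13 \<in> fE B" "f14 \<in> fE B" "f23 \<in> fE B" "f24 \<in> fE B"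
  using redex neq by (simp_all add: B_parts(2))

lemma B_values:
  "flab B k1 = Cocontr" "flab B k2 = Cocontr" "flab B g3 = Contr" "flab B g4 = Contr"
  "fup B e3 = Vtx g3" "fup B e4 = Vtx g4"
  "fup B f13 = Vtx k1" "fup B f14 = Vtx k1" "fup B f23 = Vtx k2" "fup B f24 = Vtx k2"
  "flo B e1 = Vtx k1" "flo B e2 = Vtx k2"
  "flo B f13 = Vtx g3" "flo B f14 = Vtx g4" "flo B f23 = Vtx g3" "flo B f24 = Vtx g4"
proof -
  show "flab B k1 = Cocontr" "flab B k2 = Cocontr" "flab B g3 = Contr" "flab B g4 = Contr"
    using B_parts(3)[of k1] B_parts(3)[of k2] B_parts(3)[of g3] B_parts(3)[of g4] neq
    by (simp_all add: B_parts(1))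
  show "fup B e3 = Vtx g3" "fup B e4 = Vtx g4"
    "fup B f13 = Vtx k1" "fup B f14 = Vtx k1" "fup B f23 = Vtx k2" "fup B f24 = Vtx k2"
    using B_parts(4)[OF B_edges(3)] B_parts(4)[OF B_edges(4)] B_parts(4)[OF B_edges(5)]
      B_parts(4)[OF B_edges(6)] B_parts(4)[OF B_edges(7)] B_parts(4)[OF B_edges(8)] neq by simp_all
  show "flo B e1 = Vtx k1" "flo B e2 = Vtx k2"
    "flo B f13 = Vtx g3" "flo B f14 = Vtx g4" "flo B f23 = Vtx g3" "flo B f24 = Vtx g4"
    using B_parts(5)[OF B_edges(1)] B_parts(5)[OF B_edges(2)] B_parts(5)[OF B_edges(5)]
      B_parts(5)[OF B_edges(6)] B_parts(5)[OF B_edges(7)] B_parts(5)[OF B_edges(8)] neq by simp_all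
qed

sublocale step: rewrite_step A B g k e "{k1, k2, g3, g4}" "{f13, f14, f23, f24}"
  "\<lambda>w. if w = g3 \<or> w = g4 then k else g" False
proof
  show "flow_shape A" "no_closed_walk A" by (fact shape_A no_closed_walk_A)+
  show "g \<in> fV A" "k \<in> fV A" "g \<noteq> k" "e \<in> fE A" "fup A e = Vtx g" "flo A e = Vtx k"
    using redex neq by auto
  show "{k1, k2, g3, g4} \<inter> fV A = {}" "{f13, f14, f23, f24} \<inter> fE A = {}"
    "finite {f13, f14, f23, f24}" "{f13, f14, f23, f24} \<noteq> {}"
    using fresh by auto
  show "fV B = fV A - {g, k} \<union> {k1, k2, g3, g4}" "fE B = fE A - {e} \<union> {f13, f14, f23, f24}"
    by (fact B_parts)+
  fix a z
  show "a \<in> fV A - {g, k} \<Longrightarrow> flab B a = flab A a"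
    using B_parts(1) B_parts(3)[of a] fresh by auto
  show "a \<in> fE A - {e} \<Longrightarrow> fup A a \<notin> {Vtx g, Vtx k} \<Longrightarrow> fup B a = fup A a"
    using B_parts(2) B_parts(4)[of a] fresh redex by auto
  show "a \<in> fE A - {e} \<Longrightarrow> flo A a \<notin> {Vtx g, Vtx k} \<Longrightarrow> flo B a = flo A a"
    using B_parts(2) B_parts(5)[of a] fresh redex by auto
  show "\<exists>w\<in>{k1, k2, g3, g4}. fup B a = Vtx w \<and> (if w = g3 \<or> w = g4 then k else g) = z"
    if "a \<in> fE A - {e}" "fup A a = Vtx z" "z \<in> {g, k}"
  proof -
    have "a = e3 \<and> z = k \<or> a = e4 \<and> z = k"
      using that incidence_A by (auto simp: set_eq_iff)
    then show ?thesis using B_values neq by auto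
  qed
  show "\<exists>w\<in>{k1, k2, g3, g4}. flo B a = Vtx w \<and> (if w = g3 \<or> w = g4 then k else g) = z"
    if "a \<in> fE A - {e}" "flo A a = Vtx z" "z \<in> {g, k}"
  proof -
    have "a = e1 \<and> z = g \<or> a = e2 \<and> z = g"
      using that incidence_A by (auto simp: set_eq_iff)
    then show ?thesis using B_values neq by auto
  qed
  show "a \<in> {f13, f14, f23, f24} \<Longrightarrow> \<exists>w\<in>{k1, k2, g3, g4}. \<exists>w'\<in>{k1, k2, g3, g4}.
      fup B a = Vtx w \<and> flo B a = Vtx w'
      \<and> Vtx (if w = g3 \<or> w = g4 then k else g) = dart_src A (e, \<not> False)
      \<and> Vtx (if w' = g3 \<or> w' = g4 then k else g) = dart_tgt A (e, \<not> False)"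
    using B_values redex neq by auto
qed

lemma touched_B:
  assumes "a \<in> fE B"
  shows "fup B a \<in> Vtx ` {k1, k2, g3, g4} \<Longrightarrow> a \<in> {e3, e4, f13, f14, f23, f24}"
    and "flo B a \<in> Vtx ` {k1, k2, g3, g4} \<Longrightarrow> a \<in> {e1, e2, f13, f14, f23, f24}"
  using step.up_B_new[OF assms] step.lo_B_new[OF assms] unfolding incidence_A by auto

lemma incidence_B:
  "{a\<in>fE B. flo B a = Vtx k1} = {e1}" "{a\<in>fE B. fup B a = Vtx k1} = {f13, f14}"
  "{a\<in>fE B. flo B a = Vtx k2} = {e2}" "{a\<in>fE B. fup B a = Vtx k2} = {f23, f24}"
  "{a\<in>fE B. flo B a = Vtx g3} = {f13, f23}" "{a\<in>fE B. fup B a = Vtx g3} = {e3}"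
  "{a\<in>fE B. flo B a = Vtx g4} = {f14, f24}" "{a\<in>fE B. fup B a = Vtx g4} = {e4}"
proof -
  have lo: "{a\<in>fE B. flo B a = Vtx w} = {a \<in> {e1, e2, f13, f14, f23, f24}. flo B a = Vtx w}"
    and up: "{a\<in>fE B. fup B a = Vtx w} = {a \<in> {e3, e4, f13, f14, f23, f24}. fup B a = Vtx w}"
    if "w \<in> {k1, k2, g3, g4}" for w
    using touched_B B_edges that by blast+
  show "{a\<in>fE B. flo B a = Vtx k1} = {e1}" "{a\<in>fE B. fup B a = Vtx k1} = {f13, f14}"
    "{a\<in>fE B. flo B a = Vtx k2} = {e2}" "{a\<in>fE B. fup B a = Vtx k2} = {f23, f24}"
    "{a\<in>fE B. flo B a = Vtx g3} = {f13, f23}" "{a\<in>fE B. fup B a = Vtx g3} = {e3}"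
    "{a\<in>fE B. flo B a = Vtx g4} = {f14, f24}" "{a\<in>fE B. fup B a = Vtx g4} = {e4}"
    by (simp_all add: lo up) (auto simp: B_values neq)
qed

definition redex_turns_g :: "(dart \<times> dart) set" where
  "redex_turns_g = {((e1, True), (e, True)), ((e2, True), (e, True)),
     ((e, False), (e1, False)), ((e, False), (e2, False))}"

definition redex_turns_k :: "(dart \<times> dart) set" where
  "redex_turns_k = {((e, True), (e3, True)), ((e, True), (e4, True)),
     ((e3, False), (e, False)), ((e4, False), (e, False))}"

definition new_turns_k1 :: "(dart \<times> dart) set" where
  "new_turns_k1 = {((e1, True), (f13, True)), ((e1, True), (f14, True)),
     ((f13, False), (e1, False)), ((f14, False), (e1, False))}"

definition new_turns_k2 :: "(dart \<times> dart) set" where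
  "new_turns_k2 = {((e2, True), (f23, True)), ((e2, True), (f24, True)),
     ((f23, False), (e2, False)), ((f24, False), (e2, False))}"

definition new_turns_g3 :: "(dart \<times> dart) set" where
  "new_turns_g3 = {((f13, True), (e3, True)), ((f23, True), (e3, True)),
     ((e3, False), (f13, False)), ((e3, False), (f23, False))}"

definition new_turns_g4 :: "(dart \<times> dart) set" where
  "new_turns_g4 = {((f14, True), (e4, True)), ((f24, True), (e4, True)),
     ((e4, False), (f14, False)), ((e4, False), (f24, False))}"

abbreviation redex_turns :: "(dart \<times> dart) set" where
  "redex_turns \<equiv> redex_turns_g \<union> redex_turns_k"

abbreviation new_turns :: "(dart \<times> dart) set" where
  "new_turns \<equiv> new_turns_k1 \<union> new_turns_k2 \<union> new_turns_g3 \<union> new_turns_g4"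

lemmas redex_turns_defs = redex_turns_g_def redex_turns_k_def
lemmas new_turns_defs = new_turns_k1_def new_turns_k2_def new_turns_g3_def new_turns_g4_def

lemma turns_at_redex:
  "turn_at A g x y \<longleftrightarrow> (x, y) \<in> redex_turns_g" "turn_at A k x y \<longleftrightarrow> (x, y) \<in> redex_turns_k"
  unfolding redex_turns_defs
  by (cases x; cases y; auto simp: turn_at_Pair_iff incidence_A turn_ok_def redex neq split: if_splits)+

lemma turns_at_new:
  "turn_at B k1 x y \<longleftrightarrow> (x, y) \<in> new_turns_k1" "turn_at B k2 x y \<longleftrightarrow> (x, y) \<in> new_turns_k2"
  "turn_at B g3 x y \<longleftrightarrow> (x, y) \<in> new_turns_g3" "turn_at B g4 x y \<longleftrightarrow> (x, y) \<in> new_turns_g4"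
  unfolding new_turns_defs
  by (cases x; cases y; auto simp: turn_at_Pair_iff incidence_B turn_ok_def B_parts(1) B_values neq
      split: if_splits)+

lemma redex_turns_turn: "(x, y) \<in> redex_turns \<Longrightarrow> turn A x y"
  using turns_at_redex unfolding turn_def by blast

lemma turn_A_at_redex:
  "turn A x y \<Longrightarrow> dart_tgt A x \<in> {Vtx g, Vtx k} \<Longrightarrow> (x, y) \<in> redex_turns"
  using turn_via_tgt[of A x g y] turn_via_tgt[of A x k y] turns_at_redex by blast

lemma new_turns_turn: "(x, y) \<in> new_turns \<Longrightarrow> turn B x y"
  using turns_at_new unfolding turn_def by blast

lemma turn_B_at_new: "turn B x y \<Longrightarrow> dart_tgt B x \<in> Vtx ` {k1, k2, g3, g4} \<Longrightarrow> (x, y) \<in> new_turns"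
  using turn_via_tgt[of B x k1 y] turn_via_tgt[of B x k2 y] turn_via_tgt[of B x g3 y]
    turn_via_tgt[of B x g4 y] turns_at_new by blast

lemma new_turn_witnesses:
  "turn B (f13, False) (e1, False)" "turn B (f23, False) (e2, False)" "turn B (f13, True) (e3, True)"
  "turn B (f14, True) (e4, True)" "turn B (e1, True) (f13, True)" "turn B (e2, True) (f23, True)"
  "turn B (e3, False) (f13, False)" "turn B (e4, False) (f14, False)"
  using new_turns_turn unfolding new_turns_defs by simp_all

definition pre :: "dart \<Rightarrow> dart" where
  "pre x = (if snd x then if fst x \<in> {f13, f14} then (e1, True) else (e2, True)
            else if fst x \<in> {f13, f23} then (e3, False) else (e4, False))"

definition suc :: "dart \<Rightarrow> dart" where
  "suc x = (if snd x then if fst x \<in> {f13, f23} then (e3, True) else (e4, True)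
            else if fst x \<in> {f13, f14} then (e1, False) else (e2, False))"

lemma collapse_new_turn:
  assumes "turn B x y" "dart_tgt B x \<in> Vtx ` {k1, k2, g3, g4}"
  shows "turn A (step.collapse x) (step.collapse y)
    \<and> (fst x \<in> {f13, f14, f23, f24} \<or> fst y \<in> {f13, f14, f23, f24})"
proof -
  have "(x, y) \<in> new_turns" by (rule turn_B_at_new[OF assms])
  then have "(step.collapse x, step.collapse y) \<in> redex_turns
      \<and> (fst x \<in> {f13, f14, f23, f24} \<or> fst y \<in> {f13, f14, f23, f24})"
    unfolding new_turns_defs redex_turns_defs
    by (elim UnE insertE emptyE) (simp_all add: step.collapse_def neq)
  then show ?thesis using redex_turns_turn by blast
qed

lemma lift_pre:
  assumes "x \<in> darts B" "fst x \<notin> {f13, f14, f23, f24}" "turn A y x" "dart_tgt A y \<in> {Vtx g, Vtx k}"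
  shows "\<exists>y'. turn B y' x"
proof -
  have "fst x \<noteq> e" using assms(1) step.r_notin_B by (auto simp: darts_def)
  then have "x \<in> {(e1, False), (e2, False), (e3, True), (e4, True)}"
    using turn_A_at_redex[OF assms(3,4)] assms(2) unfolding redex_turns_defs by auto
  then show ?thesis using new_turn_witnesses by blast
qed

lemma lift_suc:
  assumes "x \<in> darts B" "fst x \<notin> {f13, f14, f23, f24}" "turn A x y" "dart_tgt A x \<in> {Vtx g, Vtx k}"
  shows "\<exists>y'. turn B x y'"
proof -
  have "fst x \<noteq> e" using assms(1) step.r_notin_B by (auto simp: darts_def)
  then have "x \<in> {(e1, True), (e2, True), (e3, False), (e4, False)}"
    using turn_A_at_redex[OF assms(3,4)] assms(2) unfolding redex_turns_defs by auto
  then show ?thesis using new_turn_witnesses by blast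
qed

lemma new_dart_cases:
  "fst x \<in> {f13, f14, f23, f24} \<Longrightarrow>
   x = (f13, True) \<or> x = (f14, True) \<or> x = (f23, True) \<or> x = (f24, True)
    \<or> x = (f13, False) \<or> x = (f14, False) \<or> x = (f23, False) \<or> x = (f24, False)"
  by (cases x) auto

lemma pre_iff:
  assumes "fst x \<in> {f13, f14, f23, f24}"
  shows "turn B p x \<longleftrightarrow> p = pre x"
proof -
  have "(p, x) \<in> new_turns \<longleftrightarrow> p = pre x"
    using new_dart_cases[OF assms] unfolding new_turns_defs by (elim disjE) (simp_all add: pre_def neq)
  then show ?thesis
    using turn_B_at_new[of p x] new_turns_turn[of p x] step.turn_new_ends(1)[OF assms, of p] by blast
qed

lemma suc_iff:
  assumes "fst x \<in> {f13, f14, f23, f24}"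
  shows "turn B x s \<longleftrightarrow> s = suc x"
proof -
  have "(x, s) \<in> new_turns \<longleftrightarrow> s = suc x"
    using new_dart_cases[OF assms] unfolding new_turns_defs by (elim disjE) (simp_all add: suc_def neq)
  then show ?thesis
    using turn_B_at_new[of x s] new_turns_turn[of x s] step.turn_new_ends(2)[OF assms, of s] by blast
qed

lemma pre_suc_old: "fst (pre x) \<notin> {f13, f14, f23, f24} \<and> fst (suc x) \<notin> {f13, f14, f23, f24}"
  using neq by (simp add: pre_def suc_def)

lemma new_dart_determined:
  assumes "fst x \<in> {f13, f14, f23, f24}" "fst y \<in> {f13, f14, f23, f24}"
    and "snd x = snd y" "pre x = pre y" "suc x = suc y"
  shows "x = y"
  using new_dart_cases[OF assms(1)] new_dart_cases[OF assms(2)] assms(3-5)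
  by (elim disjE) (simp_all add: pre_def suc_def neq)

lemma turn_types:
  "fst x \<in> {f13, f14, f23, f24} \<Longrightarrow> turn_type B (pre x) < turn_type B x \<and> turn_type A (pre x) = turn_type B x
     \<and> turn_type A (step.collapse x) = turn_type B (pre x)"
  by (drule new_dart_cases, elim disjE)
    (simp_all add: pre_def turn_type_def step.collapse_def redex B_values neq)

lemma degrees_B:
  "w \<in> {k1, k2, g3, g4} \<Longrightarrow> card {a\<in>fE B. flo B a = Vtx w} = upper_count (flab B w)
     \<and> card {a\<in>fE B. fup B a = Vtx w} = lower_count (flab B w)"
  by (auto simp: incidence_B B_values neq)

lemma decreases: "flow_shape B \<and> no_closed_walk B \<and> inversion_measure B < inversion_measure A"
  by (rule step.decreases[OF collapse_new_turn lift_pre lift_suc pre_iff suc_iff pre_suc_old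
        new_dart_determined turn_types degrees_B])

end

section \<open>Termination\<close>

lemma c1_step_redex:
  "c1_step A B \<Longrightarrow> flow_shape A \<Longrightarrow> no_closed_walk A \<Longrightarrow>
   \<exists>g k e1 e2 e e3 n k1 k2 d1 d2. c1_redex A B g k e1 e2 e e3 n k1 k2 d1 d2"
  unfolding c1_step_def c1_redex_def by (elim exE conjE) (intro exI conjI; assumption)

lemma c2_step_redex:
  "c2_step A B \<Longrightarrow> flow_shape A \<Longrightarrow> no_closed_walk A \<Longrightarrow>
   \<exists>i k e1 e2 e3 e4 g i1 i2 d1 d2. c2_redex A B i k e1 e2 e3 e4 g i1 i2 d1 d2"
  unfolding c2_step_def c2_redex_def by (elim exE conjE) (intro exI conjI; assumption)

lemma c3_step_redex:
  "c3_step A B \<Longrightarrow> flow_shape A \<Longrightarrow> no_closed_walk A \<Longrightarrow>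
   \<exists>g k e1 e2 e e3 e4 k1 k2 g3 g4 f13 f14 f23 f24.
      c3_redex A B g k e1 e2 e e3 e4 k1 k2 g3 g4 f13 f14 f23 f24"
  unfolding c3_step_def c3_redex_def by (elim exE conjE) (intro exI conjI; assumption)

lemma c_step_decreases:
  assumes "c_step A B" "flow_shape A" "no_closed_walk A"
  shows "flow_shape B \<and> no_closed_walk B \<and> inversion_measure B < inversion_measure A"
  using assms(1) unfolding c_step_def
proof (elim disjE)
  assume "c1_step A B"
  then show ?thesis using c1_step_redex assms(2,3) c1_redex.decreases by metis
next
  assume "c2_step A B"
  then show ?thesis using c2_step_redex assms(2,3) c2_redex.decreases by metis
next
  assume "c3_step A B"
  then show ?thesis using c3_step_redex assms(2,3) c3_redex.decreases by metis
qed

theorem theorem4p22: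
  assumes "atomic_flow A" and "cycle_free A"
  shows "\<not> (\<exists>f :: nat \<Rightarrow> flow. f 0 = A \<and> (\<forall>i. c_step (f i) (f (Suc i))))"
proof
  assume "\<exists>f :: nat \<Rightarrow> flow. f 0 = A \<and> (\<forall>i. c_step (f i) (f (Suc i)))"
  then obtain f :: "nat \<Rightarrow> flow" where f: "f 0 = A" "\<And>i. c_step (f i) (f (Suc i))" by blast
  have good: "flow_shape (f i) \<and> no_closed_walk (f i)" for i
  proof (induction i)
    case 0
    show ?case using f(1) assms atomic_flow_shape cycle_free_no_closed_walk by blast
  next
    case (Suc i)
    then show ?case using c_step_decreases[OF f(2)] by blast
  qed
  have "(f (Suc i), f i) \<in> measure inversion_measure" for i
    using c_step_decreases[OF f(2)] good by simp
  then show False using wf_iff_no_infinite_down_chain wf_measure by blast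
qed

end
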